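(* There is $L>0$ independent of $(x,n,\mu)$ such that $0\le V^N(x,n,\mu)\le L(1+x)$ for all $n\in\{0,\dots,N\}$, $\mu\in[\mu_m,\mu_M]$ and $x\in(0,\infty)$.
   Context: Let $(\Omega,\mathcal G,\mathsf P)$ support a standard Brownian motion $(B_t)_{t\ge0}$ and, independent of it, the mortality process described below. Fix $\theta>0$, $\alpha\ge0$, $\sigma>0$, $\rho>0$, $\nu\in[0,1]$, $K\in\mathbb R$, $\hat\rho>0$, $0<\mu_m\le\mu_M<\infty$, $\hat\mu\in[\mu_m,\mu_M]$, and assume $\theta-\alpha-\rho-\mu_m<0$. For $x>0$, $X_t=x\exp((\theta-\alpha-\sigma^2/2)t+\sigma B_t)$ solves $dX_t=(\theta-\alpha)X_tdt+\sigma X_tdB_t$, $X_0=x$. Mortality: fix $N\in\mathbb N_0$, rates $\lambda_1,\dots,\lambda_N\ge0$, set $\lambda_n=0$ for $n\ge N+1$, and for $n\le N-1$, $\mu\in[\mu_m,\mu_M]$ let $q(n,\mu,\cdot)$ be a Borel probability measure on $[\mu_m,\mu_M]$, measurable in $\mu$. The process $(n_t,\mu_t)$ started at $(n,\mu)$ stays at $(n,\mu)$ for an exponential time $\xi$ of rate $\lambda_{n+1}$ ($\xi=\infty$ if the rate is $0$), then jumps to $(n+1,Z)$ with $Z\sim q(n,\mu,\cdot)$ independent of $\xi$, and then evolves in the same way. Let $\mathbb F$ be the augmented filtration generated by $B$ and $(n_t,\mu_t)$, $\mathcal T(\mathbb F)$ its stopping times with values in $[0,\infty]$ (terms discounted at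 $\tau$ are $0$ on $\{\tau=\infty\}$), and $\mathsf E_{x,n,\mu}$ the expectation with $X_0=x$, $(n_0,\mu_0)=(n,\mu)$. Define $\hat f(n,\mu):=(\hat\rho+\hat\mu)\mathsf E_{n,\mu}[\int_0^\infty e^{-\rho u-\int_0^u\mu_sds}du]$ and $$V^N(x,n,\mu):=\sup_{\tau\in\mathcal T(\mathbb F)}\mathsf E_{x,n,\mu}\Big[\int_0^\tau e^{-\int_0^t(\rho+\mu_s)ds}(\alpha+\nu\mu_t)X_tdt+e^{-\int_0^\tau(\rho+\mu_s)ds}\hat f(n_\tau,\mu_\tau)(X_\tau-K)\Big].$$ *)

theory Defs
  imports "HOL-Probability.Probability"
begin

definition std_brownian_motion :: "'a measure \<Rightarrow> (real \<Rightarrow> 'a \<Rightarrow> real) \<Rightarrow> bool" where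
  "std_brownian_motion M B \<longleftrightarrow>
     (\<forall>t\<ge>0. B t \<in> borel_measurable M) \<and>
     (\<forall>\<omega>\<in>space M. B 0 \<omega> = 0 \<and> continuous_on {0..} (\<lambda>t. B t \<omega>)) \<and>
     (\<forall>s t. 0 \<le> s \<longrightarrow> s < t \<longrightarrow>
        distributed M lborel (\<lambda>\<omega>. B t \<omega> - B s \<omega>) (normal_density 0 (sqrt (t - s)))) \<and>
     (\<forall>ts. sorted_wrt (<) ts \<longrightarrow> (\<forall>t\<in>set ts. 0 \<le> t) \<longrightarrow>
        prob_space.indep_vars M (\<lambda>_. borel) (\<lambda>i \<omega>. B (ts ! Suc i) \<omega> - B (ts ! i) \<omega>)
          {..<length ts - 1})"

text \<open>Quantile function of a probability measure on the reals; if U is uniform on (0,1),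
  then quantile Q U has law Q.\<close>

definition quantile :: "real measure \<Rightarrow> real \<Rightarrow> real" where
  "quantile Q u = Inf {z. u \<le> measure Q {..z}}"

text \<open>Marks: the value of mu after k jumps, started at (n0, mu0); the k-th new value is drawn
  from q(n0+k, previous value, .) using the independent uniform U k.\<close>

fun chain_mark :: "(nat \<Rightarrow> real \<Rightarrow> real measure) \<Rightarrow> (nat \<Rightarrow> 'a \<Rightarrow> real)
    \<Rightarrow> nat \<Rightarrow> real \<Rightarrow> nat \<Rightarrow> 'a \<Rightarrow> real" where
  "chain_mark q U n0 mu0 0 \<omega> = mu0"
| "chain_mark q U n0 mu0 (Suc k) \<omega> = quantile (q (n0 + k) (chain_mark q U n0 mu0 k \<omega>)) (U k \<omega>)"

text \<open>Holding time in the k-th visited state (n0+k): exponential of rate lambda_(n0+k+1),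
  obtained as E_k / lambda with E_k standard exponential; infinite if the rate is 0.\<close>

definition hold_time :: "(nat \<Rightarrow> real) \<Rightarrow> (nat \<Rightarrow> 'a \<Rightarrow> real) \<Rightarrow> nat \<Rightarrow> nat \<Rightarrow> 'a \<Rightarrow> ennreal" where
  "hold_time lam E n0 k \<omega> =
     (if lam (n0 + k + 1) = 0 then \<infinity> else ennreal (E k \<omega> / lam (n0 + k + 1)))"

definition jump_time :: "(nat \<Rightarrow> real) \<Rightarrow> (nat \<Rightarrow> 'a \<Rightarrow> real) \<Rightarrow> nat \<Rightarrow> nat \<Rightarrow> 'a \<Rightarrow> ennreal" where
  "jump_time lam E n0 k \<omega> = (\<Sum>j<k. hold_time lam E n0 j \<omega>)"

definition jump_count :: "(nat \<Rightarrow> real) \<Rightarrow> (nat \<Rightarrow> 'a \<Rightarrow> real) \<Rightarrow> nat \<Rightarrow> real \<Rightarrow> 'a \<Rightarrow> nat" where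
  "jump_count lam E n0 t \<omega> = card {k. jump_time lam E n0 (Suc k) \<omega> \<le> ennreal t}"

definition chain_n :: "(nat \<Rightarrow> real) \<Rightarrow> (nat \<Rightarrow> 'a \<Rightarrow> real) \<Rightarrow> nat \<Rightarrow> real \<Rightarrow> 'a \<Rightarrow> nat" where
  "chain_n lam E n0 t \<omega> = n0 + jump_count lam E n0 t \<omega>"

definition chain_mu :: "(nat \<Rightarrow> real) \<Rightarrow> (nat \<Rightarrow> real \<Rightarrow> real measure) \<Rightarrow> (nat \<Rightarrow> 'a \<Rightarrow> real)
    \<Rightarrow> (nat \<Rightarrow> 'a \<Rightarrow> real) \<Rightarrow> nat \<Rightarrow> real \<Rightarrow> real \<Rightarrow> 'a \<Rightarrow> real" where
  "chain_mu lam q E U n0 mu0 t \<omega> = chain_mark q U n0 mu0 (jump_count lam E n0 t \<omega>) \<omega>"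

definition aug_filtration :: "'a measure \<Rightarrow> (real \<Rightarrow> 'a \<Rightarrow> real) \<Rightarrow> (real \<Rightarrow> 'a \<Rightarrow> nat)
    \<Rightarrow> (real \<Rightarrow> 'a \<Rightarrow> real) \<Rightarrow> ennreal \<Rightarrow> 'a measure" where
  "aug_filtration M B Np Mp t = sigma (space M)
     ({B s -` A \<inter> space M | s A. 0 \<le> s \<and> ennreal s \<le> t \<and> A \<in> sets borel}
      \<union> {Np s -` A \<inter> space M | s A. 0 \<le> s \<and> ennreal s \<le> t}
      \<union> {Mp s -` A \<inter> space M | s A. 0 \<le> s \<and> ennreal s \<le> t \<and> A \<in> sets borel}
      \<union> null_sets (completion M))"

definition gbm :: "real \<Rightarrow> real \<Rightarrow> real \<Rightarrow> real \<Rightarrow> (real \<Rightarrow> 'a \<Rightarrow> real) \<Rightarrow> real \<Rightarrow> 'a \<Rightarrow> real" where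
  "gbm \<theta> \<alpha> \<sigma> x B t \<omega> = x * exp ((\<theta> - \<alpha> - \<sigma>\<^sup>2 / 2) * t + \<sigma> * B t \<omega>)"

definition discount :: "real \<Rightarrow> (real \<Rightarrow> 'a \<Rightarrow> real) \<Rightarrow> real \<Rightarrow> 'a \<Rightarrow> real" where
  "discount \<rho> Mp t \<omega> = exp (- (\<rho> * t + set_lebesgue_integral lborel {0..t} (\<lambda>s. Mp s \<omega>)))"

definition fhat :: "'a measure \<Rightarrow> (nat \<Rightarrow> real) \<Rightarrow> (nat \<Rightarrow> real \<Rightarrow> real measure)
    \<Rightarrow> (nat \<Rightarrow> 'a \<Rightarrow> real) \<Rightarrow> (nat \<Rightarrow> 'a \<Rightarrow> real) \<Rightarrow> real \<Rightarrow> real \<Rightarrow> real \<Rightarrow> nat \<Rightarrow> real \<Rightarrow> real" where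
  "fhat M lam q E U \<rho> \<rho>h \<mu>h n \<mu> = (\<rho>h + \<mu>h) *
     (\<integral>\<omega>. set_lebesgue_integral lborel {0..} (\<lambda>u. discount \<rho> (chain_mu lam q E U n \<mu>) u \<omega>) \<partial>M)"

definition value_fn :: "'a measure \<Rightarrow> (real \<Rightarrow> 'a \<Rightarrow> real) \<Rightarrow> (nat \<Rightarrow> 'a \<Rightarrow> real) \<Rightarrow> (nat \<Rightarrow> 'a \<Rightarrow> real)
    \<Rightarrow> (nat \<Rightarrow> real) \<Rightarrow> (nat \<Rightarrow> real \<Rightarrow> real measure)
    \<Rightarrow> real \<Rightarrow> real \<Rightarrow> real \<Rightarrow> real \<Rightarrow> real \<Rightarrow> real \<Rightarrow> real \<Rightarrow> real
    \<Rightarrow> real \<Rightarrow> nat \<Rightarrow> real \<Rightarrow> ereal" where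
  "value_fn M B E U lam q \<theta> \<alpha> \<sigma> \<rho> \<nu> K \<rho>h \<mu>h x n \<mu> =
     (let Np = chain_n lam E n; Mp = chain_mu lam q E U n \<mu>; X = gbm \<theta> \<alpha> \<sigma> x B in
      SUP \<tau> \<in> {\<tau> :: 'a \<Rightarrow> ennreal. stopping_time (aug_filtration M B Np Mp) \<tau>}.
        ereal (\<integral>\<omega>.
           set_lebesgue_integral lborel {t. 0 \<le> t \<and> ennreal t < \<tau> \<omega>}
             (\<lambda>t. discount \<rho> Mp t \<omega> * (\<alpha> + \<nu> * Mp t \<omega>) * X t \<omega>)
         + (if \<tau> \<omega> = \<infinity> then 0 else
             (let T = enn2real (\<tau> \<omega>) in
              discount \<rho> Mp T \<omega> * fhat M lam q E U \<rho> \<rho>h \<mu>h (Np T \<omega>) (Mp T \<omega>) * (X T \<omega> - K)))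
         \<partial>completion M))"

end

theory Submission
  imports Defs
begin

text \<open>
  Stopping at \<tau> = \<infinity> collects only the nonnegative running reward, so V \<ge> 0. For the upper
  bound, the mortality rate stays in [\<mu>m, \<mu>M], so discounting runs at rate at least \<rho> + \<mu>m and
  f-hat is at most (\<rho>h + \<mu>h) / \<rho>. With \<kappa> = \<rho> + \<mu>m - (\<theta> - \<alpha>) > 0, the discounted price
  e^(-(\<rho> + \<mu>m) t) X t is at most x e^(-\<kappa> t / 2) W for all t at once, where
  W = \<Sum>k e^(-(\<kappa> + \<sigma>^2) k / 2) sup_(s \<le> k+1) e^(\<sigma> B s). Hence the reward up to any random
  time is at most a constant times x W plus a constant. Finally E W < \<infinity>: Levy's reflection
  argument on dyadic grids gives E sup_(s \<le> T) e^(\<sigma> B s) \<le> 2 E e^(\<sigma> B T) = 2 e^(\<sigma>^2 T / 2),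
  and the series is geometric.
\<close>

section \<open>Gaussian facts and Brownian increments\<close>

lemma nn_integral_normal_density: "0 < s \<Longrightarrow> (\<integral>\<^sup>+x. ennreal (normal_density m s x) \<partial>lborel) = 1"
  by (subst nn_integral_eq_integral) (auto intro: integrable_normal_density simp: integral_normal_density)

lemma nn_integral_exp_normal:
  assumes D: "distributed M lborel Y (\<lambda>x. ennreal (normal_density 0 s x))" and s: "0 < s"
  shows "(\<integral>\<^sup>+\<omega>. ennreal (exp (a * Y \<omega>)) \<partial>M) = ennreal (exp (a\<^sup>2 * s\<^sup>2 / 2))"
proof -
  have shift: "normal_density 0 s y * exp (a * y) = exp (a\<^sup>2 * s\<^sup>2 / 2) * normal_density (a * s\<^sup>2) s y"
    for y :: real
  proof -
    have "exp (- y\<^sup>2 / (2 * s\<^sup>2)) * exp (a * y) = exp (a\<^sup>2 * s\<^sup>2 / 2) * exp (- (y - a * s\<^sup>2)\<^sup>2 / (2 * s\<^sup>2))"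
      unfolding exp_add[symmetric] using s by (simp add: field_simps power2_eq_square)
    then show ?thesis unfolding normal_density_def by (simp add: algebra_simps)
  qed
  have "(\<integral>\<^sup>+\<omega>. ennreal (exp (a * Y \<omega>)) \<partial>M) =
      (\<integral>\<^sup>+y. ennreal (normal_density 0 s y) * ennreal (exp (a * y)) \<partial>lborel)"
    by (rule distributed_nn_integral[OF D, symmetric]) simp
  also have "\<dots> = (\<integral>\<^sup>+y. ennreal (exp (a\<^sup>2 * s\<^sup>2 / 2)) * ennreal (normal_density (a * s\<^sup>2) s y) \<partial>lborel)"
    by (intro nn_integral_cong) (simp add: shift ennreal_mult[symmetric])
  also have "\<dots> = ennreal (exp (a\<^sup>2 * s\<^sup>2 / 2))"
    by (subst nn_integral_cmult) (auto simp: nn_integral_normal_density s)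
  finally show ?thesis .
qed

lemma normal_prob_nonneg_ge_half:
  assumes "prob_space M" and D: "distributed M lborel Y (\<lambda>x. ennreal (normal_density 0 s x))"
    and s: "0 < s"
  shows "1/2 \<le> measure M {\<omega>\<in>space M. 0 \<le> Y \<omega>}"
proof -
  interpret prob_space M by fact
  have "distributed M lborel (\<lambda>\<omega>. 0 + (-1) * Y \<omega>)
      (\<lambda>x. ennreal (normal_density (0 + (-1) * 0) (\<bar>-1\<bar> * s) x))"
    by (rule normal_density_affine[OF D s]) simp
  then have D': "distributed M lborel (\<lambda>\<omega>. - Y \<omega>) (\<lambda>x. ennreal (normal_density 0 s x))"
    by simp
  have [measurable]: "Y \<in> borel_measurable M"
    using D by (simp add: distributed_def)
  have "emeasure M (Y -` {0..} \<inter> space M) = emeasure M ((\<lambda>\<omega>. - Y \<omega>) -` {0..} \<inter> space M)"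
    by (simp add: distributed_emeasure[OF D] distributed_emeasure[OF D'])
  moreover have "Y -` {0..} \<inter> space M = {\<omega>\<in>space M. 0 \<le> Y \<omega>}"
    and "(\<lambda>\<omega>. - Y \<omega>) -` {0..} \<inter> space M = {\<omega>\<in>space M. Y \<omega> \<le> 0}" by auto
  ultimately have symm: "prob {\<omega>\<in>space M. 0 \<le> Y \<omega>} = prob {\<omega>\<in>space M. Y \<omega> \<le> 0}"
    by (simp add: measure_def)
  have "1 = prob ({\<omega>\<in>space M. 0 \<le> Y \<omega>} \<union> {\<omega>\<in>space M. Y \<omega> \<le> 0})"
    by (subst prob_space[symmetric]) (rule arg_cong[where f=prob], auto)
  also have "\<dots> \<le> prob {\<omega>\<in>space M. 0 \<le> Y \<omega>} + prob {\<omega>\<in>space M. Y \<omega> \<le> 0}"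
    by (rule measure_subadditive) auto
  finally show ?thesis using symm by simp
qed

lemma std_brownian_motionD:
  assumes "std_brownian_motion M B"
  shows brownian_measurable: "\<And>t. 0 \<le> t \<Longrightarrow> B t \<in> borel_measurable M"
    and brownian_zero: "\<And>\<omega>. \<omega> \<in> space M \<Longrightarrow> B 0 \<omega> = 0"
    and brownian_continuous: "\<And>\<omega>. \<omega> \<in> space M \<Longrightarrow> continuous_on {0..} (\<lambda>t. B t \<omega>)"
    and brownian_increment_normal: "\<And>s t. 0 \<le> s \<Longrightarrow> s < t \<Longrightarrow>
        distributed M lborel (\<lambda>\<omega>. B t \<omega> - B s \<omega>) (\<lambda>x. ennreal (normal_density 0 (sqrt (t - s)) x))"
    and brownian_increments_indep: "\<And>ts. sorted_wrt (<) ts \<Longrightarrow> (\<forall>t\<in>set ts. 0 \<le> t) \<Longrightarrow>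
        prob_space.indep_vars M (\<lambda>_. borel) (\<lambda>i \<omega>. B (ts ! Suc i) \<omega> - B (ts ! i) \<omega>) {..<length ts - 1}"
  using assms unfolding std_brownian_motion_def by auto

lemma grid_nonneg:
  fixes t :: "nat \<Rightarrow> real"
  assumes "t 0 = 0" and "strict_mono_on {..m} t" and "j \<le> m"
  shows "0 \<le> t j"
  using assms strict_mono_onD[OF assms(2), of 0 j] by (cases "j = 0") auto

text \<open>Merge the steps from t i to t m into one step of a coarser grid, whose increments are
  independent.\<close>

lemma brownian_past_indep_increment:
  fixes B :: "real \<Rightarrow> 'a \<Rightarrow> real" and t :: "nat \<Rightarrow> real"
  assumes M: "prob_space M" and BM: "std_brownian_motion M B"
    and t0: "t 0 = 0" and t_mono: "strict_mono_on {..m} t" and "i < m"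
    and Xa: "Xa \<in> sets (PiM {..<i} (\<lambda>_. borel))" and C: "C \<in> sets borel"
  shows "measure M ((\<lambda>\<omega>. restrict (\<lambda>l. B (t (Suc l)) \<omega> - B (t l) \<omega>) {..<i}) -` Xa \<inter> space M
           \<inter> {\<omega>\<in>space M. B (t m) \<omega> - B (t i) \<omega> \<in> C})
       = measure M ((\<lambda>\<omega>. restrict (\<lambda>l. B (t (Suc l)) \<omega> - B (t l) \<omega>) {..<i}) -` Xa \<inter> space M)
         * measure M {\<omega>\<in>space M. B (t m) \<omega> - B (t i) \<omega> \<in> C}"
proof -
  interpret prob_space M by fact
  define s where "s l = (if l \<le> i then t l else t m)" for l
  define ts where "ts = map s [0..<i+2]"
  have sorted: "sorted_wrt (<) ts"
    unfolding ts_def sorted_wrt_iff_nth_less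
    using \<open>i < m\<close> by (auto simp: s_def simp del: upt_Suc intro!: strict_mono_onD[OF t_mono])
  have nonneg: "\<forall>u\<in>set ts. 0 \<le> u"
    using \<open>i < m\<close> by (auto simp: ts_def s_def simp del: upt_Suc intro!: grid_nonneg[OF t0 t_mono])
  have "length ts - 1 = Suc i" by (simp add: ts_def)
  then have ind: "indep_vars (\<lambda>_. borel) (\<lambda>l \<omega>. B (ts ! Suc l) \<omega> - B (ts ! l) \<omega>) {..<Suc i}"
    using brownian_increments_indep[OF BM sorted nonneg] by simp
  define inc where "inc l \<omega> = (if l < i then B (t (Suc l)) \<omega> - B (t l) \<omega> else B (t m) \<omega> - B (t i) \<omega>)"
    for l \<omega>
  have "inc l \<omega> = B (ts ! Suc l) \<omega> - B (ts ! l) \<omega>" if "l \<le> i" for l \<omega>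
    using that \<open>i < m\<close> by (auto simp: inc_def ts_def s_def nth_append simp del: upt_Suc)
  then have "indep_vars (\<lambda>_. borel) inc {..<Suc i} \<longleftrightarrow>
      indep_vars (\<lambda>_. borel) (\<lambda>l \<omega>. B (ts ! Suc l) \<omega> - B (ts ! l) \<omega>) {..<Suc i}"
    by (intro indep_vars_cong) (auto simp: fun_eq_iff)
  with ind have ind_inc: "indep_vars (\<lambda>_. borel) inc {..<Suc i}" by simp
  define K where "K b = (if b then {..<i} else {i})" for b
  have ind2: "indep_vars (\<lambda>b. PiM (K b) (\<lambda>_. borel)) (\<lambda>b \<omega>. restrict (\<lambda>l. inc l \<omega>) (K b)) UNIV"
    by (rule indep_vars_restrict[OF ind_inc]) (auto simp: K_def disjoint_family_on_def)
  define Xb where "Xb = {v \<in> space (PiM {i} (\<lambda>_. borel::real measure)). v i \<in> C}"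
  have Xb: "Xb \<in> sets (PiM {i} (\<lambda>_. borel::real measure))"
    unfolding Xb_def using C by measurable
  define A where "A b = (if b then Xa else Xb)" for b
  have "prob (\<Inter>b. (\<lambda>\<omega>. restrict (\<lambda>l. inc l \<omega>) (K b)) -` A b \<inter> space M)
     = (\<Prod>b\<in>UNIV. prob ((\<lambda>\<omega>. restrict (\<lambda>l. inc l \<omega>) (K b)) -` A b \<inter> space M))"
    by (rule indep_varsD[OF ind2]) (auto simp: A_def K_def Xa Xb)
  moreover have "(\<lambda>\<omega>. restrict (\<lambda>l. inc l \<omega>) {..<i}) = (\<lambda>\<omega>. restrict (\<lambda>l. B (t (Suc l)) \<omega> - B (t l) \<omega>) {..<i})"
    by (auto simp: inc_def fun_eq_iff restrict_def)
  moreover have "(\<lambda>\<omega>. restrict (\<lambda>l. inc l \<omega>) {i}) -` Xb \<inter> space M = {\<omega>\<in>space M. B (t m) \<omega> - B (t i) \<omega> \<in> C}"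
    by (auto simp: Xb_def inc_def space_PiM)
  ultimately show ?thesis
    by (simp add: UNIV_bool A_def K_def Int_commute mult.commute)
qed

section \<open>Levy's reflection inequality\<close>

lemma sets_PiM_first_passage:
  fixes i :: nat
  shows "{v \<in> space (PiM {..<i} (\<lambda>_. borel)). (\<forall>j<i. (\<Sum>l<j. v l) \<le> a) \<and> a < (\<Sum>l<i. v l)}
     \<in> sets (PiM {..<i} (\<lambda>_. borel :: real measure))"
proof -
  let ?P = "PiM {..<i} (\<lambda>_. borel :: real measure)"
  have sum_meas: "(\<lambda>v. \<Sum>l<j. v l) \<in> borel_measurable ?P" if "j \<le> i" for j
    using that by (intro borel_measurable_sum measurable_component_singleton) auto
  have "Measurable.pred ?P (\<lambda>v. (\<Sum>l<j. v l) \<le> a)" if "j \<le> i" for j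
    using sum_meas[OF that] by measurable
  then have [measurable]: "Measurable.pred ?P (\<lambda>v. \<forall>j\<in>{..<i}. (\<Sum>l<j. v l) \<le> a)"
    by (intro pred_intros_finite) auto
  have [measurable]: "Measurable.pred ?P (\<lambda>v. a < (\<Sum>l<i. v l))"
    using sum_meas[of i] by measurable
  have "{v \<in> space ?P. (\<forall>j\<in>{..<i}. (\<Sum>l<j. v l) \<le> a) \<and> a < (\<Sum>l<i. v l)} \<in> sets ?P"
    by measurable
  then show ?thesis by (simp add: lessThan_def)
qed

text \<open>Reflection at the first passage above a: after it, B (t m) ends above a with probability
  at least 1/2, independently of the past.\<close>

lemma brownian_first_passage_reflection:
  fixes B :: "real \<Rightarrow> 'a \<Rightarrow> real" and t :: "nat \<Rightarrow> real" and a :: real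
  assumes M: "prob_space M" and BM: "std_brownian_motion M B"
    and t0: "t 0 = 0" and t_mono: "strict_mono_on {..m} t" and "i < m"
  defines "A \<equiv> {\<omega>\<in>space M. (\<forall>j<i. B (t j) \<omega> \<le> a) \<and> a < B (t i) \<omega>}"
  shows "measure M A \<le> 2 * measure M (A \<inter> {\<omega>\<in>space M. a < B (t m) \<omega>})"
proof -
  interpret prob_space M by fact
  have [measurable]: "B (t j) \<in> borel_measurable M" if "j \<le> m" for j
    by (rule brownian_measurable[OF BM grid_nonneg[OF t0 t_mono that]])
  have ti: "t i < t m"
    using \<open>i < m\<close> by (intro strict_mono_onD[OF t_mono]) auto
  define V where "V \<omega> = restrict (\<lambda>l. B (t (Suc l)) \<omega> - B (t l) \<omega>) {..<i}" for \<omega>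
  define Xa where "Xa = {v \<in> space (PiM {..<i} (\<lambda>_. borel::real measure)).
      (\<forall>j<i. (\<Sum>l<j. v l) \<le> a) \<and> a < (\<Sum>l<i. v l)}"
  have "(\<Sum>l<j. B (t (Suc l)) \<omega> - B (t l) \<omega>) = B (t j) \<omega>" if "\<omega> \<in> space M" for j \<omega>
    using that sum_lessThan_telescope[of "\<lambda>l. B (t l) \<omega>" j] by (simp add: t0 brownian_zero[OF BM])
  then have AV: "A = V -` Xa \<inter> space M"
    by (auto simp: A_def V_def Xa_def space_PiM)
  define D where "D = {\<omega>\<in>space M. 0 \<le> B (t m) \<omega> - B (t i) \<omega>}"
  have "D = {\<omega>\<in>space M. B (t m) \<omega> - B (t i) \<omega> \<in> {0..}}" by (auto simp: D_def)
  then have indep: "prob (A \<inter> D) = prob A * prob D"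
    unfolding AV V_def Xa_def
    by (simp only:) (rule brownian_past_indep_increment[OF M BM t0 t_mono \<open>i < m\<close> sets_PiM_first_passage], simp)
  have "1/2 \<le> prob D"
    unfolding D_def
    by (rule normal_prob_nonneg_ge_half[OF M brownian_increment_normal[OF BM grid_nonneg[OF t0 t_mono] ti]])
      (use \<open>i < m\<close> ti in auto)
  then have "prob A * 1 \<le> prob A * (2 * prob D)"
    by (intro mult_left_mono) auto
  then have "prob A \<le> 2 * prob (A \<inter> D)"
    using indep by (simp add: algebra_simps)
  also have "prob (A \<inter> D) \<le> prob (A \<inter> {\<omega>\<in>space M. a < B (t m) \<omega>})"
    using \<open>i < m\<close> by (intro finite_measure_mono) (auto simp: A_def D_def)
  finally show ?thesis by simp
qed

lemma first_passage_UN: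
  fixes f :: "nat \<Rightarrow> 'a \<Rightarrow> real"
  shows "{\<omega>\<in>S. \<exists>j\<le>m. a < f j \<omega>} = (\<Union>i\<le>m. {\<omega>\<in>S. (\<forall>j<i. f j \<omega> \<le> a) \<and> a < f i \<omega>})"
proof (intro equalityI subsetI)
  fix \<omega> assume "\<omega> \<in> {\<omega>\<in>S. \<exists>j\<le>m. a < f j \<omega>}"
  then obtain j where j: "j \<le> m" "a < f j \<omega>" "\<omega> \<in> S" by auto
  define i where "i = (LEAST i. a < f i \<omega>)"
  have "a < f i \<omega>" "i \<le> j" "\<And>k. k < i \<Longrightarrow> f k \<omega> \<le> a"
    unfolding i_def using j by (auto intro: LeastI Least_le dest: not_less_Least)
  then show "\<omega> \<in> (\<Union>i\<le>m. {\<omega>\<in>S. (\<forall>j<i. f j \<omega> \<le> a) \<and> a < f i \<omega>})"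
    using j by (auto intro!: bexI[of _ i])
qed auto

lemma disjoint_family_first_passage:
  fixes f :: "nat \<Rightarrow> 'a \<Rightarrow> real"
  shows "disjoint_family_on (\<lambda>i. {\<omega>\<in>S. (\<forall>j<i. f j \<omega> \<le> a) \<and> a < f i \<omega>}) I"
  unfolding disjoint_family_on_def
  by (auto simp: not_less_iff_gr_or_eq) (meson linorder_neqE_nat not_le)+

lemma brownian_grid_max_tail_le:
  fixes B :: "real \<Rightarrow> 'a \<Rightarrow> real" and t :: "nat \<Rightarrow> real"
  assumes M: "prob_space M" and BM: "std_brownian_motion M B"
    and t0: "t 0 = 0" and t_mono: "strict_mono_on {..m} t"
  shows "measure M {\<omega>\<in>space M. \<exists>j\<le>m. a < B (t j) \<omega>} \<le> 2 * measure M {\<omega>\<in>space M. a < B (t m) \<omega>}"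
proof -
  interpret prob_space M by fact
  have [measurable]: "B (t j) \<in> borel_measurable M" if "j \<le> m" for j
    by (rule brownian_measurable[OF BM grid_nonneg[OF t0 t_mono that]])
  define A where "A i = {\<omega>\<in>space M. (\<forall>j<i. B (t j) \<omega> \<le> a) \<and> a < B (t i) \<omega>}" for i
  define C where "C = {\<omega>\<in>space M. a < B (t m) \<omega>}"
  have A_sets: "A i \<in> sets M" if "i \<le> m" for i
  proof -
    have "A i = (\<Inter>j\<in>{..<i}. {\<omega>\<in>space M. B (t j) \<omega> \<le> a}) \<inter> {\<omega>\<in>space M. a < B (t i) \<omega>}"
      by (auto simp: A_def)
    also have "\<dots> \<in> sets M"
      using that by (cases "i = 0") (auto intro!: sets.Int sets.finite_INT)
    finally show ?thesis .
  qed
  have C_sets: "C \<in> sets M" unfolding C_def by measurable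
  have disj: "disjoint_family_on A {..m}"
    unfolding A_def by (rule disjoint_family_first_passage)
  then have disj_C: "disjoint_family_on (\<lambda>i. A i \<inter> C) {..m}"
    unfolding disjoint_family_on_def by blast
  have union: "{\<omega>\<in>space M. \<exists>j\<le>m. a < B (t j) \<omega>} = (\<Union>i\<le>m. A i)"
    unfolding A_def by (rule first_passage_UN)
  have "prob (\<Union>i\<le>m. A i) = (\<Sum>i\<le>m. prob (A i))"
    by (rule measure_finite_Union) (auto intro: A_sets disj)
  also have "\<dots> \<le> (\<Sum>i\<le>m. 2 * prob (A i \<inter> C))"
  proof (intro sum_mono)
    fix i assume "i \<in> {..m}"
    then consider "i < m" | "i = m" by fastforce
    then show "prob (A i) \<le> 2 * prob (A i \<inter> C)"
    proof cases
      case 1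
      then show ?thesis
        unfolding A_def C_def by (rule brownian_first_passage_reflection[OF M BM t0 t_mono])
    next
      case 2
      then have "A i \<inter> C = A i" by (auto simp: A_def C_def)
      then show ?thesis by simp
    qed
  qed
  also have "\<dots> = 2 * prob (\<Union>i\<le>m. A i \<inter> C)"
    using disj_C by (subst measure_finite_Union) (auto intro!: A_sets C_sets simp: sum_distrib_left)
  also have "\<dots> \<le> 2 * prob C"
    by (intro mult_left_mono finite_measure_mono) (auto intro!: C_sets)
  finally show ?thesis unfolding union C_def .
qed

section \<open>The expected supremum of exp (\<sigma> B)\<close>

lemma nn_integral_layer_cake:
  assumes "sigma_finite_measure M" and [measurable]: "h \<in> borel_measurable M"
    and h_nonneg: "\<And>\<omega>. \<omega> \<in> space M \<Longrightarrow> 0 \<le> h \<omega>"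
  shows "(\<integral>\<^sup>+\<omega>. ennreal (h \<omega>) \<partial>M) =
    (\<integral>\<^sup>+y. indicator {0..} y * emeasure M {\<omega>\<in>space M. y < h \<omega>} \<partial>lborel)"
proof -
  interpret pair_sigma_finite M lborel
    by (intro pair_sigma_finite.intro assms(1) lborel.sigma_finite_measure_axioms)
  have "(\<integral>\<^sup>+\<omega>. ennreal (h \<omega>) \<partial>M) =
      (\<integral>\<^sup>+\<omega>. (\<integral>\<^sup>+y. indicator {0..} y * indicator {\<omega>\<in>space M. y < h \<omega>} \<omega> \<partial>lborel) \<partial>M)"
  proof (intro nn_integral_cong)
    fix \<omega> assume \<omega>: "\<omega> \<in> space M"
    then have "(\<integral>\<^sup>+y. indicator {0..} y * indicator {\<omega>\<in>space M. y < h \<omega>} \<omega> \<partial>lborel) =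
        (\<integral>\<^sup>+y. indicator {0..<h \<omega>} y \<partial>lborel)"
      by (intro nn_integral_cong) (auto simp: indicator_def)
    also have "\<dots> = ennreal (h \<omega>)"
      using h_nonneg[OF \<omega>] by simp
    finally show "ennreal (h \<omega>) =
        (\<integral>\<^sup>+y. indicator {0..} y * indicator {\<omega>\<in>space M. y < h \<omega>} \<omega> \<partial>lborel)" ..
  qed
  also have "\<dots> = (\<integral>\<^sup>+y. (\<integral>\<^sup>+\<omega>. indicator {0..} y * indicator {\<omega>\<in>space M. y < h \<omega>} \<omega> \<partial>M) \<partial>lborel)"
  proof (rule Fubini'[symmetric])
    have "(\<lambda>(\<omega>, y). indicator {0..} y * indicator {\<omega>\<in>space M. y < h \<omega>} \<omega> :: ennreal)
        = (\<lambda>p. indicator {0..} (snd p) * indicator {p\<in>space (M \<Otimes>\<^sub>M lborel). snd p < h (fst p)} p)"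
      by (auto simp: fun_eq_iff indicator_def space_pair_measure)
    also have "\<dots> \<in> borel_measurable (M \<Otimes>\<^sub>M lborel)"
      by measurable
    finally show "(\<lambda>(\<omega>, y). indicator {0..} y * indicator {\<omega>\<in>space M. y < h \<omega>} \<omega> :: ennreal)
        \<in> borel_measurable (M \<Otimes>\<^sub>M lborel)" .
  qed
  also have "\<dots> = (\<integral>\<^sup>+y. indicator {0..} y * emeasure M {\<omega>\<in>space M. y < h \<omega>} \<partial>lborel)"
    by (intro nn_integral_cong nn_integral_cmult_indicator) measurable
  finally show ?thesis .
qed

lemma borel_measurable_emeasure_tail:
  assumes "sigma_finite_measure M" and [measurable]: "g \<in> borel_measurable M"
  shows "(\<lambda>y::real. emeasure M {\<omega>\<in>space M. y < g \<omega>}) \<in> borel_measurable lborel"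
proof -
  have "{p\<in>space (lborel \<Otimes>\<^sub>M M). fst p < g (snd p)} \<in> sets (lborel \<Otimes>\<^sub>M M)"
    by measurable
  from sigma_finite_measure.measurable_emeasure_Pair[OF assms(1) this]
  show ?thesis
    by (rule measurable_cong[THEN iffD1, rotated])
      (auto intro!: arg_cong[where f="emeasure M"] simp: space_pair_measure)
qed

lemma nn_integral_le_of_tail_le:
  assumes M: "sigma_finite_measure M"
    and [measurable]: "f \<in> borel_measurable M" "g \<in> borel_measurable M"
    and f_nonneg: "\<And>\<omega>. \<omega> \<in> space M \<Longrightarrow> 0 \<le> f \<omega>" and g_nonneg: "\<And>\<omega>. \<omega> \<in> space M \<Longrightarrow> 0 \<le> g \<omega>"
    and tail: "\<And>y. 0 \<le> y \<Longrightarrow> emeasure M {\<omega>\<in>space M. y < f \<omega>} \<le> c * emeasure M {\<omega>\<in>space M. y < g \<omega>}"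
  shows "(\<integral>\<^sup>+\<omega>. ennreal (f \<omega>) \<partial>M) \<le> c * (\<integral>\<^sup>+\<omega>. ennreal (g \<omega>) \<partial>M)"
proof -
  have "(\<integral>\<^sup>+\<omega>. ennreal (f \<omega>) \<partial>M) = (\<integral>\<^sup>+y. indicator {0..} y * emeasure M {\<omega>\<in>space M. y < f \<omega>} \<partial>lborel)"
    by (rule nn_integral_layer_cake[OF M]) (auto intro: f_nonneg)
  also have "\<dots> \<le> (\<integral>\<^sup>+y. c * (indicator {0..} y * emeasure M {\<omega>\<in>space M. y < g \<omega>}) \<partial>lborel)"
    by (intro nn_integral_mono) (auto simp: indicator_def tail)
  also have "\<dots> = c * (\<integral>\<^sup>+y. indicator {0..} y * emeasure M {\<omega>\<in>space M. y < g \<omega>} \<partial>lborel)"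
    using borel_measurable_emeasure_tail[OF M, of g] by (intro nn_integral_cmult) simp
  also have "\<dots> = c * (\<integral>\<^sup>+\<omega>. ennreal (g \<omega>) \<partial>M)"
    by (subst nn_integral_layer_cake[OF M]) (auto intro: g_nonneg)
  finally show ?thesis .
qed

lemma emeasure_Max_exp_brownian_grid_gt_le:
  fixes B :: "real \<Rightarrow> 'a \<Rightarrow> real" and t :: "nat \<Rightarrow> real"
  assumes M: "prob_space M" and BM: "std_brownian_motion M B"
    and t0: "t 0 = 0" and t_mono: "strict_mono_on {..m} t" and \<sigma>: "0 < \<sigma>" and "0 < y"
  shows "emeasure M {\<omega>\<in>space M. y < Max ((\<lambda>j. exp (\<sigma> * B (t j) \<omega>)) ` {..m})}
    \<le> 2 * emeasure M {\<omega>\<in>space M. y < exp (\<sigma> * B (t m) \<omega>)}"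
proof -
  interpret prob_space M by fact
  have [measurable]: "B (t j) \<in> borel_measurable M" if "j \<le> m" for j
    by (rule brownian_measurable[OF BM grid_nonneg[OF t0 t_mono that]])
  have exp_gt_iff: "y < exp (\<sigma> * b) \<longleftrightarrow> ln y / \<sigma> < b" for b
    using \<open>0 < y\<close> \<sigma> by (metis exp_less_cancel_iff exp_ln mult.commute pos_divide_less_eq)
  have "{\<omega>\<in>space M. \<exists>j\<le>m. ln y / \<sigma> < B (t j) \<omega>} = (\<Union>j\<le>m. {\<omega>\<in>space M. ln y / \<sigma> < B (t j) \<omega>})"
    by auto
  then have "{\<omega>\<in>space M. \<exists>j\<le>m. ln y / \<sigma> < B (t j) \<omega>} \<in> sets M"
    by (auto intro!: sets.finite_UN)
  moreover have "prob {\<omega>\<in>space M. \<exists>j\<le>m. ln y / \<sigma> < B (t j) \<omega>}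
      \<le> 2 * prob {\<omega>\<in>space M. ln y / \<sigma> < B (t m) \<omega>}"
    by (rule brownian_grid_max_tail_le[OF M BM t0 t_mono])
  then have "ennreal (prob {\<omega>\<in>space M. \<exists>j\<le>m. ln y / \<sigma> < B (t j) \<omega>})
      \<le> 2 * ennreal (prob {\<omega>\<in>space M. ln y / \<sigma> < B (t m) \<omega>})"
    by (subst ennreal_numeral[symmetric], subst ennreal_mult'[symmetric]) (auto intro: ennreal_leI)
  ultimately show ?thesis
    by (simp add: Max_gr_iff Bex_def exp_gt_iff emeasure_eq_measure)
qed

lemma nn_integral_Max_exp_brownian_grid:
  fixes B :: "real \<Rightarrow> 'a \<Rightarrow> real" and t :: "nat \<Rightarrow> real"
  assumes M: "prob_space M" and BM: "std_brownian_motion M B"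
    and t0: "t 0 = 0" and t_mono: "strict_mono_on {..m} t" and "0 < m" and \<sigma>: "0 < \<sigma>"
  shows "(\<integral>\<^sup>+\<omega>. ennreal (Max ((\<lambda>j. exp (\<sigma> * B (t j) \<omega>)) ` {..m})) \<partial>M)
      \<le> 2 * ennreal (exp (\<sigma>\<^sup>2 * t m / 2))"
proof -
  interpret prob_space M by fact
  have tm: "0 < t m" using strict_mono_onD[OF t_mono, of 0 m] \<open>0 < m\<close> t0 by simp
  have [measurable]: "B (t j) \<in> borel_measurable M" if "j \<le> m" for j
    by (rule brownian_measurable[OF BM grid_nonneg[OF t0 t_mono that]])
  have [measurable]: "B (t m) \<in> borel_measurable M" by simp
  have "(\<integral>\<^sup>+\<omega>. ennreal (Max ((\<lambda>j. exp (\<sigma> * B (t j) \<omega>)) ` {..m})) \<partial>M)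
      \<le> 2 * (\<integral>\<^sup>+\<omega>. ennreal (exp (\<sigma> * B (t m) \<omega>)) \<partial>M)"
  proof (rule nn_integral_le_of_tail_le)
    show "(\<lambda>\<omega>. Max ((\<lambda>j. exp (\<sigma> * B (t j) \<omega>)) ` {..m})) \<in> borel_measurable M"
      by (rule borel_measurable_Max) auto
    show "0 \<le> Max ((\<lambda>j. exp (\<sigma> * B (t j) \<omega>)) ` {..m})" for \<omega>
      by (rule order.trans[OF _ Max_ge[of _ "exp (\<sigma> * B (t 0) \<omega>)"]]) auto
    fix y :: real assume "0 \<le> y"
    show "emeasure M {\<omega>\<in>space M. y < Max ((\<lambda>j. exp (\<sigma> * B (t j) \<omega>)) ` {..m})}
        \<le> 2 * emeasure M {\<omega>\<in>space M. y < exp (\<sigma> * B (t m) \<omega>)}"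
    proof (cases "y = 0")
      case True
      have "emeasure M {\<omega>\<in>space M. y < Max ((\<lambda>j. exp (\<sigma> * B (t j) \<omega>)) ` {..m})} \<le> 1"
        by (rule emeasure_le_1)
      also have "\<dots> \<le> 2 * emeasure M (space M)" by (simp add: emeasure_space_1)
      finally show ?thesis using True by simp
    next
      case False
      with \<open>0 \<le> y\<close> show ?thesis
        by (intro emeasure_Max_exp_brownian_grid_gt_le[OF M BM t0 t_mono \<sigma>]) simp
    qed
  qed (auto intro: sigma_finite_measure)
  also have "(\<integral>\<^sup>+\<omega>. ennreal (exp (\<sigma> * B (t m) \<omega>)) \<partial>M)
      = (\<integral>\<^sup>+\<omega>. ennreal (exp (\<sigma> * (B (t m) \<omega> - B 0 \<omega>))) \<partial>M)"
    by (intro nn_integral_cong) (simp add: brownian_zero[OF BM])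
  also have "\<dots> = ennreal (exp (\<sigma>\<^sup>2 * (sqrt (t m - 0))\<^sup>2 / 2))"
    by (rule nn_integral_exp_normal[OF brownian_increment_normal[OF BM order.refl tm]]) (use tm in simp)
  also have "\<dots> = ennreal (exp (\<sigma>\<^sup>2 * t m / 2))" using tm by simp
  finally show ?thesis .
qed

lemma dyadic_floor_approx:
  fixes s T :: real
  assumes T: "0 < T" and s: "0 \<le> s" "s \<le> T"
  defines "j \<equiv> \<lambda>n::nat. nat \<lfloor>s * 2^n / T\<rfloor>"
  shows "j n \<le> 2^n" and "(\<lambda>n. real (j n) * T / 2^n) \<longlonglongrightarrow> s"
proof -
  have fl: "real (j n) = of_int \<lfloor>s * 2^n / T\<rfloor>" for n
    unfolding j_def using s T by simp
  have "s * 2^n / T \<le> 2^n" using s T by (simp add: divide_le_eq mult.commute mult_left_mono)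
  then have "real (j n) \<le> 2^n" unfolding fl by (meson floor_le_iff le_floor_iff order.trans of_int_floor_le)
  then show "j n \<le> 2^n" by (metis of_nat_le_iff of_nat_numeral of_nat_power)
  have upper: "real (j n) * T / 2^n \<le> s" for n
  proof -
    have "real (j n) \<le> s * 2^n / T" unfolding fl by simp
    then show ?thesis using T by (simp add: field_simps)
  qed
  have lower: "s - T / 2^n \<le> real (j n) * T / 2^n" for n
  proof -
    have "(s * 2^n / T - 1) * T / 2^n \<le> real (j n) * T / 2^n"
      unfolding fl using T by (intro divide_right_mono mult_right_mono) (linarith | simp)+
    also have "(s * 2^n / T - 1) * T / 2^n = s - T / 2^n"
      using T by (simp add: field_simps)
    finally show ?thesis .
  qed
  have lim: "(\<lambda>n. s - T / 2^n) \<longlonglongrightarrow> s"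
    using tendsto_diff[OF tendsto_const LIMSEQ_divide_realpow_zero[of 2 T]] by simp
  show "(\<lambda>n. real (j n) * T / 2^n) \<longlonglongrightarrow> s"
    by (rule tendsto_sandwich[OF always_eventually always_eventually lim tendsto_const])
      (use upper lower in blast)+
qed

lemma Max_dyadic_le_Suc:
  fixes f :: "real \<Rightarrow> real"
  shows "Max ((\<lambda>j. f (real j * T / 2^n)) ` {..2^n}) \<le> Max ((\<lambda>j. f (real j * T / 2^Suc n)) ` {..2^Suc n})"
proof (subst Max_le_iff, simp, simp, safe)
  fix j :: nat assume "j \<le> 2^n"
  then show "f (real j * T / 2^n) \<le> Max ((\<lambda>j. f (real j * T / 2^Suc n)) ` {..2^Suc n})"
    by (intro Max_ge) (auto intro!: rev_image_eqI[of "2 * j"])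
qed

lemma SUP_interval_eq_SUP_Max_dyadic:
  fixes f :: "real \<Rightarrow> real"
  assumes f: "continuous_on {0..T} f" and T: "0 < T"
  shows "(SUP s\<in>{0..T}. ennreal (f s)) = (SUP n. ennreal (Max ((\<lambda>j. f (real j * T / 2^n)) ` {..2^n})))"
proof (rule antisym)
  have grid: "real j * T / 2^n \<in> {0..T}" if "j \<le> 2^n" for n j
    using that T by (auto simp: field_simps)
  show "(SUP s\<in>{0..T}. ennreal (f s)) \<le> (SUP n. ennreal (Max ((\<lambda>j. f (real j * T / 2^n)) ` {..2^n})))"
  proof (rule SUP_least)
    fix s assume s: "s \<in> {0..T}"
    define j where "j n = nat \<lfloor>s * 2^n / T\<rfloor>" for n :: nat
    have j_le: "j n \<le> 2^n" for n
      using dyadic_floor_approx(1)[OF T, of s] s unfolding j_def by auto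
    have "(\<lambda>n. real (j n) * T / 2^n) \<longlonglongrightarrow> s"
      using dyadic_floor_approx(2)[OF T, of s] s unfolding j_def by auto
    then have "(\<lambda>n. f (real (j n) * T / 2^n)) \<longlonglongrightarrow> f s"
      by (rule continuous_on_tendsto_compose[OF f]) (use s grid j_le in auto)
    then have lim: "(\<lambda>n. ennreal (f (real (j n) * T / 2^n))) \<longlonglongrightarrow> ennreal (f s)"
      by (rule tendsto_ennrealI)
    have bound: "ennreal (f (real (j n) * T / 2^n)) \<le> (SUP n. ennreal (Max ((\<lambda>j. f (real j * T / 2^n)) ` {..2^n})))"
      for n
      using j_le by (intro SUP_upper2[of n] ennreal_leI Max_ge) auto
    show "ennreal (f s) \<le> (SUP n. ennreal (Max ((\<lambda>j. f (real j * T / 2^n)) ` {..2^n})))"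
      by (rule LIMSEQ_le_const2[OF lim]) (use bound in blast)
  qed
  show "(SUP n. ennreal (Max ((\<lambda>j. f (real j * T / 2^n)) ` {..2^n}))) \<le> (SUP s\<in>{0..T}. ennreal (f s))"
  proof (rule SUP_least)
    fix n
    have "Max ((\<lambda>j. f (real j * T / 2^n)) ` {..2^n}) \<in> (\<lambda>j. f (real j * T / 2^n)) ` {..2^n}"
      by (rule Max_in) auto
    then obtain j where j: "j \<in> {..2^n}"
      and max_eq: "Max ((\<lambda>j. f (real j * T / 2^n)) ` {..2^n}) = f (real j * T / 2^n)"
      by (rule imageE)
    have "ennreal (f (real j * T / 2^n)) \<le> (SUP s\<in>{0..T}. ennreal (f s))"
      using grid[of j n] j by (intro SUP_upper) auto
    then show "ennreal (Max ((\<lambda>j. f (real j * T / 2^n)) ` {..2^n})) \<le> (SUP s\<in>{0..T}. ennreal (f s))"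
      by (simp only: max_eq)
  qed
qed

definition sup_exp_brownian :: "real \<Rightarrow> (real \<Rightarrow> 'a \<Rightarrow> real) \<Rightarrow> real \<Rightarrow> 'a \<Rightarrow> ennreal" where
  "sup_exp_brownian \<sigma> B T \<omega> = (SUP s\<in>{0..T}. ennreal (exp (\<sigma> * B s \<omega>)))"

lemma sup_exp_brownian_eq_SUP_grid:
  assumes BM: "std_brownian_motion M B" and T: "0 < T" and \<omega>: "\<omega> \<in> space M"
  shows "sup_exp_brownian \<sigma> B T \<omega> =
    (SUP n. ennreal (Max ((\<lambda>j. exp (\<sigma> * B (real j * T / 2^n) \<omega>)) ` {..2^n})))"
proof -
  have "continuous_on {0..T} (\<lambda>s. exp (\<sigma> * B s \<omega>))"
    using brownian_continuous[OF BM \<omega>]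
    by (intro continuous_intros) (auto elim: continuous_on_subset)
  then show ?thesis
    unfolding sup_exp_brownian_def by (rule SUP_interval_eq_SUP_Max_dyadic[OF _ T])
qed

lemma
  fixes B :: "real \<Rightarrow> 'a \<Rightarrow> real"
  assumes M: "prob_space M" and BM: "std_brownian_motion M B" and T: "0 < T" and \<sigma>: "0 < \<sigma>"
  shows borel_measurable_sup_exp_brownian: "sup_exp_brownian \<sigma> B T \<in> borel_measurable M"
    and nn_integral_sup_exp_brownian_le:
      "(\<integral>\<^sup>+\<omega>. sup_exp_brownian \<sigma> B T \<omega> \<partial>M) \<le> 2 * ennreal (exp (\<sigma>\<^sup>2 * T / 2))"
proof -
  interpret prob_space M by fact
  define t where "t n j = real j * T / 2^n" for n :: nat and j :: nat
  define G where "G n \<omega> = ennreal (Max ((\<lambda>j. exp (\<sigma> * B (t n j) \<omega>)) ` {..2^n}))" for n \<omega>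
  have G_meas: "G n \<in> borel_measurable M" for n
  proof -
    have [measurable]: "B (t n j) \<in> borel_measurable M" for j
      by (rule brownian_measurable[OF BM]) (use T in \<open>simp add: t_def\<close>)
    show ?thesis unfolding G_def by measurable
  qed
  have "incseq G"
    unfolding G_def t_def by (intro incseq_SucI le_funI ennreal_leI Max_dyadic_le_Suc)
  have sup_eq: "sup_exp_brownian \<sigma> B T \<omega> = (SUP n. G n \<omega>)" if "\<omega> \<in> space M" for \<omega>
    unfolding G_def t_def by (rule sup_exp_brownian_eq_SUP_grid[OF BM T that])
  show "sup_exp_brownian \<sigma> B T \<in> borel_measurable M"
    using measurable_cong[of M "sup_exp_brownian \<sigma> B T" "\<lambda>\<omega>. SUP n. G n \<omega>"] sup_eq G_meas by auto
  have "(\<integral>\<^sup>+\<omega>. sup_exp_brownian \<sigma> B T \<omega> \<partial>M) = (\<integral>\<^sup>+\<omega>. (SUP n. G n \<omega>) \<partial>M)"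
    by (intro nn_integral_cong sup_eq)
  also have "\<dots> = (SUP n. integral\<^sup>N M (G n))"
    by (rule nn_integral_monotone_convergence_SUP[OF \<open>incseq G\<close> G_meas])
  also have "\<dots> \<le> 2 * ennreal (exp (\<sigma>\<^sup>2 * T / 2))"
  proof (rule SUP_least)
    fix n
    have grid_mono: "strict_mono_on {..2^n} (t n)"
      using T by (auto simp: strict_mono_on_def t_def divide_strict_right_mono)
    have "integral\<^sup>N M (G n) \<le> 2 * ennreal (exp (\<sigma>\<^sup>2 * t n (2^n) / 2))"
      unfolding G_def by (rule nn_integral_Max_exp_brownian_grid[OF M BM _ grid_mono _ \<sigma>]) (simp_all add: t_def)
    then show "integral\<^sup>N M (G n) \<le> 2 * ennreal (exp (\<sigma>\<^sup>2 * T / 2))" by (simp add: t_def)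
  qed
  finally show "(\<integral>\<^sup>+\<omega>. sup_exp_brownian \<sigma> B T \<omega> \<partial>M) \<le> 2 * ennreal (exp (\<sigma>\<^sup>2 * T / 2))" .
qed

text \<open>A single integrable random variable dominating e^(c t + \<sigma> B t) for all t \<ge> 0 at once.\<close>

definition exp_brownian_envelope :: "real \<Rightarrow> real \<Rightarrow> (real \<Rightarrow> 'a \<Rightarrow> real) \<Rightarrow> 'a \<Rightarrow> ennreal" where
  "exp_brownian_envelope c \<sigma> B \<omega> = (\<Sum>k. ennreal (exp (c * real k)) * sup_exp_brownian \<sigma> B (real k + 1) \<omega>)"

lemma exp_brownian_le_envelope:
  assumes c: "c \<le> 0" and t: "0 \<le> t"
  shows "ennreal (exp (c * t + \<sigma> * B t \<omega>)) \<le> exp_brownian_envelope c \<sigma> B \<omega>"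
proof -
  define k where "k = nat \<lfloor>t\<rfloor>"
  have k: "real k \<le> t" "t \<le> real k + 1" using t unfolding k_def by linarith+
  have "exp (c * t + \<sigma> * B t \<omega>) \<le> exp (c * real k) * exp (\<sigma> * B t \<omega>)"
    using k c by (simp add: exp_add[symmetric] mult_left_mono_neg)
  then have "ennreal (exp (c * t + \<sigma> * B t \<omega>)) \<le> ennreal (exp (c * real k)) * ennreal (exp (\<sigma> * B t \<omega>))"
    by (simp add: ennreal_mult[symmetric] ennreal_leI)
  also have "\<dots> \<le> ennreal (exp (c * real k)) * sup_exp_brownian \<sigma> B (real k + 1) \<omega>"
    unfolding sup_exp_brownian_def using k t by (intro mult_left_mono SUP_upper) auto
  also have "\<dots> \<le> exp_brownian_envelope c \<sigma> B \<omega>"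
    unfolding exp_brownian_envelope_def
    using sum_le_suminf[of "\<lambda>k. ennreal (exp (c * real k)) * sup_exp_brownian \<sigma> B (real k + 1) \<omega>" "{k}"]
    by (simp add: summableI)
  finally show ?thesis .
qed

lemma
  fixes B :: "real \<Rightarrow> 'a \<Rightarrow> real"
  assumes M: "prob_space M" and BM: "std_brownian_motion M B" and \<sigma>: "0 < \<sigma>"
    and c: "c + \<sigma>\<^sup>2 / 2 < 0"
  shows borel_measurable_exp_brownian_envelope: "exp_brownian_envelope c \<sigma> B \<in> borel_measurable M"
    and nn_integral_exp_brownian_envelope_le: "(\<integral>\<^sup>+\<omega>. exp_brownian_envelope c \<sigma> B \<omega> \<partial>M)
      \<le> ennreal (2 * exp (\<sigma>\<^sup>2 / 2) / (1 - exp (c + \<sigma>\<^sup>2 / 2)))"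
proof -
  have [measurable]: "sup_exp_brownian \<sigma> B (real k + 1) \<in> borel_measurable M" for k
    by (rule borel_measurable_sup_exp_brownian[OF M BM _ \<sigma>]) simp
  show "exp_brownian_envelope c \<sigma> B \<in> borel_measurable M"
    unfolding exp_brownian_envelope_def by measurable
  define r where "r = exp (c + \<sigma>\<^sup>2 / 2)"
  have r: "0 < r" "r < 1" using c by (auto simp: r_def)
  have term_le: "ennreal (exp (c * real k)) * (\<integral>\<^sup>+\<omega>. sup_exp_brownian \<sigma> B (real k + 1) \<omega> \<partial>M)
      \<le> ennreal (2 * exp (\<sigma>\<^sup>2 / 2) * r ^ k)" for k
  proof -
    have real_eq: "exp (c * real k) * (2 * exp (\<sigma>\<^sup>2 * (real k + 1) / 2)) = 2 * exp (\<sigma>\<^sup>2 / 2) * r ^ k"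
      by (simp add: r_def exp_of_nat_mult[symmetric] exp_add[symmetric] algebra_simps add_divide_distrib)
    have ennreal_eq: "ennreal (exp (c * real k)) * (2 * ennreal (exp (\<sigma>\<^sup>2 * (real k + 1) / 2)))
        = ennreal (exp (c * real k) * (2 * exp (\<sigma>\<^sup>2 * (real k + 1) / 2)))"
      by (simp add: ennreal_mult)
    have "ennreal (exp (c * real k)) * (2 * ennreal (exp (\<sigma>\<^sup>2 * (real k + 1) / 2)))
        = ennreal (2 * exp (\<sigma>\<^sup>2 / 2) * r ^ k)"
      by (simp only: real_eq ennreal_eq)
    moreover have "ennreal (exp (c * real k)) * (\<integral>\<^sup>+\<omega>. sup_exp_brownian \<sigma> B (real k + 1) \<omega> \<partial>M)
        \<le> ennreal (exp (c * real k)) * (2 * ennreal (exp (\<sigma>\<^sup>2 * (real k + 1) / 2)))"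
      by (intro mult_left_mono nn_integral_sup_exp_brownian_le[OF M BM _ \<sigma>]) auto
    ultimately show ?thesis by simp
  qed
  have "(\<integral>\<^sup>+\<omega>. exp_brownian_envelope c \<sigma> B \<omega> \<partial>M)
      = (\<Sum>k. ennreal (exp (c * real k)) * \<integral>\<^sup>+\<omega>. sup_exp_brownian \<sigma> B (real k + 1) \<omega> \<partial>M)"
    unfolding exp_brownian_envelope_def
    by (subst nn_integral_suminf) (measurable, intro suminf_cong nn_integral_cmult, measurable)
  also have "\<dots> \<le> (\<Sum>k. ennreal (2 * exp (\<sigma>\<^sup>2 / 2) * r ^ k))"
    by (intro suminf_le summableI term_le)
  also have "\<dots> = ennreal (\<Sum>k. 2 * exp (\<sigma>\<^sup>2 / 2) * r ^ k)"
    using r by (intro suminf_ennreal2) (auto intro!: summable_mult)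
  also have "(\<Sum>k. 2 * exp (\<sigma>\<^sup>2 / 2) * r ^ k) = 2 * exp (\<sigma>\<^sup>2 / 2) / (1 - r)"
    using r by (subst suminf_mult) (auto simp: suminf_geometric)
  finally show "(\<integral>\<^sup>+\<omega>. exp_brownian_envelope c \<sigma> B \<omega> \<partial>M)
      \<le> ennreal (2 * exp (\<sigma>\<^sup>2 / 2) / (1 - exp (c + \<sigma>\<^sup>2 / 2)))"
    unfolding r_def .
qed

section \<open>The mortality chain and the discount factor\<close>

lemma quantile_in_atLeastAtMost:
  assumes Q: "prob_space Q" "sets Q = sets borel" "emeasure Q {a..b} = 1" and "a \<le> b"
    and u: "0 < u" "u < 1"
  shows "quantile Q u \<in> {a..b}"
proof -
  interpret Q: prob_space Q by fact
  define S where "S = {z. u \<le> measure Q {..z}}"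
  have ab: "measure Q {a..b} = 1" using Q(3) by (simp add: Q.emeasure_eq_measure)
  have "b \<in> S"
  proof -
    have "measure Q {a..b} \<le> measure Q {..b}"
      by (rule Q.finite_measure_mono) (auto simp: Q(2))
    then show ?thesis using ab u unfolding S_def by simp
  qed
  moreover have lower: "a \<le> z" if "z \<in> S" for z
  proof (rule ccontr)
    assume "\<not> a \<le> z"
    then have "measure Q ({..z} \<union> {a..b}) = measure Q {..z} + measure Q {a..b}"
      by (intro Q.finite_measure_Union) (auto simp: Q(2))
    moreover have "measure Q ({..z} \<union> {a..b}) \<le> 1" by (rule Q.prob_le_1)
    ultimately have "measure Q {..z} \<le> 0" using ab by simp
    then show False using that u unfolding S_def by simp
  qed
  ultimately have "a \<le> Inf S" "Inf S \<le> b"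
    by (auto intro!: cInf_greatest cInf_lower bdd_belowI)
  then show ?thesis unfolding quantile_def S_def by simp
qed

text \<open>No integrability is needed: a non-integrable f has Bochner integral 0.\<close>

lemma ennreal_integral_le_nn_integral:
  fixes f :: "'a \<Rightarrow> real"
  shows "ennreal (integral\<^sup>L M f) \<le> (\<integral>\<^sup>+x. ennreal (f x) \<partial>M)"
proof (cases "(\<integral>\<^sup>+x. ennreal (f x) \<partial>M) = \<infinity>")
  case False
  then obtain r where r: "(\<integral>\<^sup>+x. ennreal (f x) \<partial>M) = ennreal r" "0 \<le> r"
    by (cases "(\<integral>\<^sup>+x. ennreal (f x) \<partial>M)") auto
  then have "integral\<^sup>L M f \<le> r" by (intro integral_real_bounded) simp_all
  then show ?thesis unfolding r by (rule ennreal_leI)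
qed simp

lemma ennreal_add_le: "0 \<le> a \<Longrightarrow> ennreal (a + b) \<le> ennreal a + ennreal b"
  by (cases "0 \<le> b") (auto simp: ennreal_plus intro: order.trans[OF ennreal_leI add_increasing2])

lemma nn_integral_exp_neg_halfline:
  assumes a: "0 < a"
  shows "(\<integral>\<^sup>+t. indicator {0..} t * ennreal (exp (- a * t)) \<partial>lborel) = ennreal (1 / a)"
proof -
  interpret prob_space "density lborel (exponential_density a)"
    by (rule prob_space_exponential_density[OF a])
  have "(\<integral>\<^sup>+t. indicator {0..} t * ennreal (exp (- a * t)) \<partial>lborel)
      = (\<integral>\<^sup>+t. ennreal (1 / a) * ennreal (exponential_density a t) \<partial>lborel)"
    using a by (intro nn_integral_cong)
      (auto simp: exponential_density_def ennreal_mult[symmetric] mult.commute indicator_def)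
  also have "\<dots> = ennreal (1 / a) * (\<integral>\<^sup>+t. ennreal (exponential_density a t) \<partial>lborel)"
    by (rule nn_integral_cmult) measurable
  also have "(\<integral>\<^sup>+t. ennreal (exponential_density a t) \<partial>lborel) = 1"
    using emeasure_space_1 by (simp add: emeasure_density)
  finally show ?thesis by simp
qed

lemma AE_uniform_in_unit_interval:
  fixes U :: "nat \<Rightarrow> 'a \<Rightarrow> real"
  assumes "prob_space M" and U: "\<And>k. distributed M lborel (U k) (indicator {0<..<1})"
  shows "AE \<omega> in M. \<forall>k. U k \<omega> \<in> {0<..<1}"
proof -
  have "AE \<omega> in M. U k \<omega> \<in> {0<..<1}" for k
  proof -
    have [measurable]: "U k \<in> borel_measurable M" using U[of k] by (simp add: distributed_def)
    have "emeasure M (U k -` (- {0<..<1}) \<inter> space M)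
        = (\<integral>\<^sup>+x. indicator {0<..<1} x * indicator (- {0<..<1::real}) x \<partial>lborel)"
      by (rule distributed_emeasure[OF U[of k]]) simp
    also have "\<dots> = (\<integral>\<^sup>+x. 0 \<partial>(lborel :: real measure))"
      by (intro nn_integral_cong) (simp add: indicator_def)
    finally have "U k -` (- {0<..<1}) \<inter> space M \<in> null_sets M"
      by (auto simp: null_sets_def)
    then show ?thesis by (rule AE_I') auto
  qed
  then show ?thesis by (simp add: AE_all_countable)
qed

lemma discount_pos: "0 < discount \<rho> Mp t \<omega>"
  unfolding discount_def by simp

lemma discount_le_exp:
  assumes Mp_in: "\<And>s. Mp s \<omega> \<in> {\<mu>m..\<mu>M}" and Mp_meas: "(\<lambda>s. Mp s \<omega>) \<in> borel_measurable borel"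
    and t: "0 \<le> t"
  shows "discount \<rho> Mp t \<omega> \<le> exp (- (\<rho> + \<mu>m) * t)"
proof -
  have "set_integrable lborel {0..t} (\<lambda>s. \<mu>m)"
    unfolding set_integrable_def
    by (rule integrableI_bounded_set_indicator[where B="\<bar>\<mu>m\<bar>"]) (use t in auto)
  moreover have "norm (Mp s \<omega>) \<le> \<bar>\<mu>m\<bar> + \<bar>\<mu>M\<bar>" for s
    using Mp_in[of s] by auto
  then have "set_integrable lborel {0..t} (\<lambda>s. Mp s \<omega>)"
    unfolding set_integrable_def
    by (intro integrableI_bounded_set_indicator[where B="\<bar>\<mu>m\<bar> + \<bar>\<mu>M\<bar>"]) (use t Mp_meas in auto)
  ultimately have "set_lebesgue_integral lborel {0..t} (\<lambda>s. \<mu>m) \<le> set_lebesgue_integral lborel {0..t} (\<lambda>s. Mp s \<omega>)"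
    by (rule set_integral_mono) (use Mp_in in auto)
  moreover have "set_lebesgue_integral lborel {0..t} (\<lambda>s. \<mu>m) = t * \<mu>m"
    using t by (subst set_integral_const) auto
  ultimately show ?thesis unfolding discount_def by (simp add: algebra_simps)
qed

lemma set_integral_discount_le:
  assumes Mp_in: "\<And>s. Mp s \<omega> \<in> {\<mu>m..\<mu>M}" and Mp_meas: "(\<lambda>s. Mp s \<omega>) \<in> borel_measurable borel"
    and \<mu>m: "0 \<le> \<mu>m" and \<rho>: "0 < \<rho>"
  shows "set_lebesgue_integral lborel {0..} (\<lambda>u. discount \<rho> Mp u \<omega>) \<le> 1 / \<rho>"
proof -
  have "discount \<rho> Mp u \<omega> \<le> exp (- \<rho> * u)" if "0 \<le> u" for u
  proof -
    have "discount \<rho> Mp u \<omega> \<le> exp (- (\<rho> + \<mu>m) * u)"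
      by (rule discount_le_exp[where Mp=Mp and \<omega>=\<omega>, OF Mp_in Mp_meas that])
    also have "\<dots> \<le> exp (- \<rho> * u)" using that \<mu>m by (simp add: algebra_simps)
    finally show ?thesis .
  qed
  then have "ennreal (indicator {0..} u *\<^sub>R discount \<rho> Mp u \<omega>) \<le> indicator {0..} u * ennreal (exp (- \<rho> * u))"
    for u :: real
    by (cases "0 \<le> u") (auto intro: ennreal_leI)
  then have "ennreal (set_lebesgue_integral lborel {0..} (\<lambda>u. discount \<rho> Mp u \<omega>))
      \<le> (\<integral>\<^sup>+u. indicator {0..} u * ennreal (exp (- \<rho> * u)) \<partial>lborel)"
    unfolding set_lebesgue_integral_def
    by (intro order.trans[OF ennreal_integral_le_nn_integral] nn_integral_mono)
  also have "\<dots> = ennreal (1 / \<rho>)" by (rule nn_integral_exp_neg_halfline[OF \<rho>])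
  finally show ?thesis using \<rho> by (simp add: ennreal_le_iff)
qed

locale mortality_chain =
  fixes N :: nat and lam :: "nat \<Rightarrow> real" and q :: "nat \<Rightarrow> real \<Rightarrow> real measure"
    and \<mu>m \<mu>M :: real
  assumes lam_zero: "\<And>i. N + 1 \<le> i \<Longrightarrow> lam i = 0"
    and q_prob: "\<And>n \<mu>. n + 1 \<le> N \<Longrightarrow> \<mu> \<in> {\<mu>m..\<mu>M} \<Longrightarrow>
        prob_space (q n \<mu>) \<and> sets (q n \<mu>) = sets borel \<and> emeasure (q n \<mu>) {\<mu>m..\<mu>M} = 1"
    and \<mu>m_le_\<mu>M: "\<mu>m \<le> \<mu>M"
begin

lemma jump_time_eq_top:
  assumes "n \<le> N" and "N - n \<le> k"
  shows "jump_time lam E n (Suc k) \<omega> = \<infinity>"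
proof -
  have "hold_time lam E n (N - n) \<omega> = \<infinity>"
    using assms lam_zero by (simp add: hold_time_def)
  moreover have "hold_time lam E n (N - n) \<omega> \<le> jump_time lam E n (Suc k) \<omega>"
    unfolding jump_time_def using assms(2) by (intro member_le_sum) auto
  ultimately show ?thesis by (simp add: top_unique)
qed

lemma jumps_before_subset:
  assumes "n \<le> N"
  shows "{k. jump_time lam E n (Suc k) \<omega> \<le> ennreal t} \<subseteq> {..<N - n}"
proof
  fix k assume "k \<in> {k. jump_time lam E n (Suc k) \<omega> \<le> ennreal t}"
  then have "jump_time lam E n (Suc k) \<omega> \<noteq> \<infinity>" by (auto simp: top_unique)
  then show "k \<in> {..<N - n}"
    using jump_time_eq_top[OF assms, of k E \<omega>] by (cases "N - n \<le> k") auto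
qed

lemma jump_count_le: "n \<le> N \<Longrightarrow> jump_count lam E n t \<omega> \<le> N - n"
  unfolding jump_count_def using card_mono[OF _ jumps_before_subset] by fastforce

lemma jump_count_mono:
  assumes "n \<le> N" and "s \<le> t"
  shows "jump_count lam E n s \<omega> \<le> jump_count lam E n t \<omega>"
  unfolding jump_count_def
proof (rule card_mono)
  show "finite {k. jump_time lam E n (Suc k) \<omega> \<le> ennreal t}"
    by (rule finite_subset[OF jumps_before_subset[OF assms(1)]]) simp
  show "{k. jump_time lam E n (Suc k) \<omega> \<le> ennreal s} \<subseteq> {k. jump_time lam E n (Suc k) \<omega> \<le> ennreal t}"
    using \<open>s \<le> t\<close> by (auto intro: order.trans ennreal_leI)
qed

lemma chain_n_le:
  assumes "n \<le> N"
  shows "chain_n lam E n t \<omega> \<le> N"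
  using jump_count_le[OF assms, of E t \<omega>] assms unfolding chain_n_def by simp

lemma chain_mark_in_bounds:
  assumes \<mu>: "\<mu> \<in> {\<mu>m..\<mu>M}" and "n \<le> N" and U: "\<forall>k. U k \<omega> \<in> {0<..<1}"
  shows "k \<le> N - n \<Longrightarrow> chain_mark q U n \<mu> k \<omega> \<in> {\<mu>m..\<mu>M}"
proof (induction k)
  case 0
  then show ?case using \<mu> by simp
next
  case (Suc k)
  then have "n + k + 1 \<le> N" "chain_mark q U n \<mu> k \<omega> \<in> {\<mu>m..\<mu>M}"
    using \<open>n \<le> N\<close> by simp_all
  then have "prob_space (q (n + k) (chain_mark q U n \<mu> k \<omega>))"
      "sets (q (n + k) (chain_mark q U n \<mu> k \<omega>)) = sets borel"
      "emeasure (q (n + k) (chain_mark q U n \<mu> k \<omega>)) {\<mu>m..\<mu>M} = 1"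
    using q_prob by blast+
  from quantile_in_atLeastAtMost[OF this \<mu>m_le_\<mu>M] U show ?case by simp
qed

lemma chain_mu_in_bounds:
  assumes "\<mu> \<in> {\<mu>m..\<mu>M}" and "n \<le> N" and "\<forall>k. U k \<omega> \<in> {0<..<1}"
  shows "chain_mu lam q E U n \<mu> t \<omega> \<in> {\<mu>m..\<mu>M}"
  unfolding chain_mu_def by (rule chain_mark_in_bounds[where U=U and \<omega>=\<omega>, OF assms]) (rule jump_count_le[OF assms(2)])

lemma chain_mu_path_measurable:
  assumes "n \<le> N"
  shows "(\<lambda>s. chain_mu lam q E U n \<mu> s \<omega>) \<in> borel_measurable borel"
proof -
  define J where "J s = jump_count lam E n s \<omega>" for s
  have "mono (\<lambda>s. real (J s))"
    unfolding J_def by (intro monoI) (simp add: jump_count_mono[OF assms])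
  then have J_real[measurable]: "(\<lambda>s. real (J s)) \<in> borel_measurable borel"
    by (rule borel_measurable_mono)
  have "J \<in> measurable borel (count_space UNIV)"
  proof (subst measurable_count_space_eq2_countable, safe)
    fix a :: nat
    have "J -` {a} \<inter> space borel = (\<lambda>s. real (J s)) -` {real a} \<inter> space borel" by auto
    then show "J -` {a} \<inter> space borel \<in> sets borel"
      using measurable_sets[OF J_real, of "{real a}"] by simp
  qed auto
  then have "(\<lambda>s. chain_mark q U n \<mu> (J s) \<omega>) \<in> borel_measurable borel"
    by (rule measurable_compose[OF _ measurable_count_space_eq1[THEN iffD2]]) auto
  then show ?thesis unfolding chain_mu_def J_def .
qed

lemma fhat_in_bounds:
  assumes M: "prob_space M" and U: "\<And>k. distributed M lborel (U k) (indicator {0<..<1})"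
    and \<rho>: "0 < \<rho>" and h: "0 \<le> \<rho>h + \<mu>h" and \<mu>m: "0 \<le> \<mu>m"
    and \<mu>: "\<mu> \<in> {\<mu>m..\<mu>M}" and n: "n \<le> N"
  shows "fhat M lam q E U \<rho> \<rho>h \<mu>h n \<mu> \<in> {0..(\<rho>h + \<mu>h) / \<rho>}"
proof -
  interpret prob_space M by fact
  define I where "I \<omega> = set_lebesgue_integral lborel {0..} (\<lambda>u. discount \<rho> (chain_mu lam q E U n \<mu>) u \<omega>)"
    for \<omega>
  have I_nonneg: "0 \<le> I \<omega>" for \<omega>
    unfolding I_def set_lebesgue_integral_def
    by (rule Bochner_Integration.integral_nonneg) (auto simp: discount_pos less_imp_le)
  have I_le: "I \<omega> \<le> 1 / \<rho>" if good: "\<forall>k. U k \<omega> \<in> {0<..<1}" for \<omega>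
    unfolding I_def
    by (rule set_integral_discount_le[where Mp="chain_mu lam q E U n \<mu>" and \<omega>=\<omega>,
          OF chain_mu_in_bounds[where E=E and U=U and \<omega>=\<omega>, OF \<mu> n good] chain_mu_path_measurable[OF n] \<mu>m \<rho>])
  have "(\<integral>\<^sup>+\<omega>. ennreal (I \<omega>) \<partial>M) \<le> (\<integral>\<^sup>+\<omega>. ennreal (1 / \<rho>) \<partial>M)"
    using AE_uniform_in_unit_interval[of M U, OF M U]
    by (intro nn_integral_mono_AE) (auto elim!: eventually_mono intro!: ennreal_leI I_le)
  then have "integral\<^sup>L M I \<le> 1 / \<rho>"
    using \<rho> by (intro integral_real_bounded) (simp_all add: emeasure_space_1)
  moreover have "0 \<le> integral\<^sup>L M I"
    by (rule Bochner_Integration.integral_nonneg) (rule I_nonneg)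
  ultimately show ?thesis
    unfolding fhat_def I_def[symmetric] using h
    by (auto simp: mult_left_mono[of _ "1/\<rho>", simplified])
qed

end

section \<open>Bounds on the gains\<close>

definition running_gain ::
    "real \<Rightarrow> real \<Rightarrow> real \<Rightarrow> (real \<Rightarrow> 'a \<Rightarrow> real) \<Rightarrow> (real \<Rightarrow> 'a \<Rightarrow> real) \<Rightarrow> ennreal \<Rightarrow> 'a \<Rightarrow> real" where
  "running_gain \<rho> \<alpha> \<nu> Mp X T \<omega> = set_lebesgue_integral lborel {t. 0 \<le> t \<and> ennreal t < T}
     (\<lambda>t. discount \<rho> Mp t \<omega> * (\<alpha> + \<nu> * Mp t \<omega>) * X t \<omega>)"

definition terminal_gain :: "real \<Rightarrow> (real \<Rightarrow> 'a \<Rightarrow> real) \<Rightarrow> (real \<Rightarrow> 'a \<Rightarrow> real)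
    \<Rightarrow> (real \<Rightarrow> 'a \<Rightarrow> real) \<Rightarrow> real \<Rightarrow> ennreal \<Rightarrow> 'a \<Rightarrow> real" where
  "terminal_gain \<rho> Mp F X K T \<omega> = (if T = \<infinity> then 0 else
     discount \<rho> Mp (enn2real T) \<omega> * F (enn2real T) \<omega> * (X (enn2real T) \<omega> - K))"

lemma value_fn_eq_SUP_gain:
  fixes M :: "'a measure" and B :: "real \<Rightarrow> 'a \<Rightarrow> real" and E U :: "nat \<Rightarrow> 'a \<Rightarrow> real"
    and lam :: "nat \<Rightarrow> real" and q :: "nat \<Rightarrow> real \<Rightarrow> real measure" and n :: nat
    and \<theta> \<alpha> \<sigma> \<rho> \<nu> K \<rho>h \<mu>h x \<mu> :: real
  defines "Mp \<equiv> chain_mu lam q E U n \<mu>" and "Np \<equiv> chain_n lam E n" and "X \<equiv> gbm \<theta> \<alpha> \<sigma> x B"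
    and "F \<equiv> \<lambda>t \<omega>. fhat M lam q E U \<rho> \<rho>h \<mu>h (chain_n lam E n t \<omega>) (chain_mu lam q E U n \<mu> t \<omega>)"
  shows "value_fn M B E U lam q \<theta> \<alpha> \<sigma> \<rho> \<nu> K \<rho>h \<mu>h x n \<mu> =
    (SUP \<tau> \<in> {\<tau>. stopping_time (aug_filtration M B Np Mp) \<tau>}.
      ereal (\<integral>\<omega>. running_gain \<rho> \<alpha> \<nu> Mp X (\<tau> \<omega>) \<omega> + terminal_gain \<rho> Mp F X K (\<tau> \<omega>) \<omega> \<partial>completion M))"
  unfolding assms value_fn_def running_gain_def terminal_gain_def Let_def by (rule refl)

lemma discounted_gbm_le_envelope:
  assumes c: "c = \<theta> - \<alpha> - \<sigma>\<^sup>2 / 2 - \<delta> + \<epsilon>" "c \<le> 0" and x: "0 \<le> x" and t: "0 \<le> t"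
  shows "ennreal (exp (- \<delta> * t) * gbm \<theta> \<alpha> \<sigma> x B t \<omega>)
    \<le> ennreal (x * exp (- \<epsilon> * t)) * exp_brownian_envelope c \<sigma> B \<omega>"
proof -
  have "exp (- \<delta> * t) * gbm \<theta> \<alpha> \<sigma> x B t \<omega> = x * exp (- \<delta> * t + ((\<theta> - \<alpha> - \<sigma>\<^sup>2 / 2) * t + \<sigma> * B t \<omega>))"
    unfolding gbm_def exp_add by simp
  also have "- \<delta> * t + ((\<theta> - \<alpha> - \<sigma>\<^sup>2 / 2) * t + \<sigma> * B t \<omega>) = - \<epsilon> * t + (c * t + \<sigma> * B t \<omega>)"
    unfolding c(1) by (simp add: algebra_simps)
  also have "x * exp (- \<epsilon> * t + (c * t + \<sigma> * B t \<omega>)) = (x * exp (- \<epsilon> * t)) * exp (c * t + \<sigma> * B t \<omega>)"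
    by (simp only: exp_add[of "- \<epsilon> * t"] mult.assoc)
  finally have eq: "exp (- \<delta> * t) * gbm \<theta> \<alpha> \<sigma> x B t \<omega>
      = x * exp (- \<epsilon> * t) * exp (c * t + \<sigma> * B t \<omega>)" .
  have "ennreal (exp (- \<delta> * t) * gbm \<theta> \<alpha> \<sigma> x B t \<omega>)
      = ennreal (x * exp (- \<epsilon> * t)) * ennreal (exp (c * t + \<sigma> * B t \<omega>))"
    unfolding eq using x by (intro ennreal_mult) auto
  also have "\<dots> \<le> ennreal (x * exp (- \<epsilon> * t)) * exp_brownian_envelope c \<sigma> B \<omega>"
    by (intro mult_left_mono exp_brownian_le_envelope c(2) t) simp
  finally show ?thesis .
qed

lemma running_gain_nonneg:
  assumes "\<And>s. Mp s \<omega> \<in> {\<mu>m..\<mu>M}" and "0 \<le> \<mu>m" "0 \<le> \<alpha>" "0 \<le> \<nu>" and "\<And>t. 0 \<le> X t \<omega>"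
  shows "0 \<le> running_gain \<rho> \<alpha> \<nu> Mp X T \<omega>"
  unfolding running_gain_def set_lebesgue_integral_def
proof (rule Bochner_Integration.integral_nonneg)
  fix t
  have "0 \<le> \<alpha> + \<nu> * Mp t \<omega>"
    using assms(1)[of t] assms(2-4) by (intro add_nonneg_nonneg mult_nonneg_nonneg) auto
  then show "0 \<le> indicator {t. 0 \<le> t \<and> ennreal t < T} t *\<^sub>R (discount \<rho> Mp t \<omega> * (\<alpha> + \<nu> * Mp t \<omega>) * X t \<omega>)"
    using assms(5)[of t] discount_pos[of \<rho> Mp t \<omega>] by (simp add: indicator_def)
qed

lemma running_reward_le_envelope:
  assumes Mp_in: "\<And>s. Mp s \<omega> \<in> {\<mu>m..\<mu>M}" and Mp_meas: "(\<lambda>s. Mp s \<omega>) \<in> borel_measurable borel"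
    and \<alpha>: "0 \<le> \<alpha>" and \<nu>: "0 \<le> \<nu>" "\<nu> \<le> 1" and \<mu>m: "0 \<le> \<mu>m" and x: "0 \<le> x"
    and c: "c = \<theta> - \<alpha> - \<sigma>\<^sup>2 / 2 - (\<rho> + \<mu>m) + \<epsilon>" "c \<le> 0" and t: "0 \<le> t"
  shows "ennreal (discount \<rho> Mp t \<omega> * (\<alpha> + \<nu> * Mp t \<omega>) * gbm \<theta> \<alpha> \<sigma> x B t \<omega>)
    \<le> ennreal ((\<alpha> + \<mu>M) * x) * exp_brownian_envelope c \<sigma> B \<omega> * ennreal (exp (- \<epsilon> * t))"
proof -
  have X_nonneg: "0 \<le> gbm \<theta> \<alpha> \<sigma> x B t \<omega>"
    using x by (simp add: gbm_def)
  have \<mu>M: "0 \<le> \<mu>M" using Mp_in[of 0] \<mu>m by simp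
  have "0 \<le> \<alpha> + \<nu> * Mp t \<omega>" "\<alpha> + \<nu> * Mp t \<omega> \<le> \<alpha> + \<mu>M"
    using Mp_in[of t] \<mu>m \<alpha> \<nu> mult_left_le_one_le[of "Mp t \<omega>" \<nu>] by auto
  then have "discount \<rho> Mp t \<omega> * (\<alpha> + \<nu> * Mp t \<omega>) \<le> exp (- (\<rho> + \<mu>m) * t) * (\<alpha> + \<mu>M)"
    using discount_le_exp[where Mp=Mp and \<omega>=\<omega>, OF Mp_in Mp_meas t] discount_pos[of \<rho> Mp t \<omega>]
    by (intro mult_mono) auto
  from mult_right_mono[OF this X_nonneg]
  have "ennreal (discount \<rho> Mp t \<omega> * (\<alpha> + \<nu> * Mp t \<omega>) * gbm \<theta> \<alpha> \<sigma> x B t \<omega>)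
      \<le> ennreal ((\<alpha> + \<mu>M) * (exp (- (\<rho> + \<mu>m) * t) * gbm \<theta> \<alpha> \<sigma> x B t \<omega>))"
    by (intro ennreal_leI) (simp add: mult_ac)
  also have "\<dots> = ennreal (\<alpha> + \<mu>M) * ennreal (exp (- (\<rho> + \<mu>m) * t) * gbm \<theta> \<alpha> \<sigma> x B t \<omega>)"
    using \<alpha> \<mu>M X_nonneg by (intro ennreal_mult) auto
  also have "\<dots> \<le> ennreal (\<alpha> + \<mu>M) * (ennreal (x * exp (- \<epsilon> * t)) * exp_brownian_envelope c \<sigma> B \<omega>)"
    by (intro mult_left_mono discounted_gbm_le_envelope[OF c x t]) simp
  also have "\<dots> = ennreal ((\<alpha> + \<mu>M) * x) * exp_brownian_envelope c \<sigma> B \<omega> * ennreal (exp (- \<epsilon> * t))"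
    using \<alpha> \<mu>M x by (simp add: ennreal_mult mult_ac)
  finally show ?thesis .
qed

lemma running_gain_le:
  assumes Mp_in: "\<And>s. Mp s \<omega> \<in> {\<mu>m..\<mu>M}" and Mp_meas: "(\<lambda>s. Mp s \<omega>) \<in> borel_measurable borel"
    and \<alpha>: "0 \<le> \<alpha>" and \<nu>: "0 \<le> \<nu>" "\<nu> \<le> 1" and \<mu>m: "0 \<le> \<mu>m" and x: "0 \<le> x" and \<epsilon>: "0 < \<epsilon>"
    and c: "c = \<theta> - \<alpha> - \<sigma>\<^sup>2 / 2 - (\<rho> + \<mu>m) + \<epsilon>" "c \<le> 0"
  shows "ennreal (running_gain \<rho> \<alpha> \<nu> Mp (gbm \<theta> \<alpha> \<sigma> x B) T \<omega>)
    \<le> ennreal ((\<alpha> + \<mu>M) * x / \<epsilon>) * exp_brownian_envelope c \<sigma> B \<omega>"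
proof -
  define W where "W = exp_brownian_envelope c \<sigma> B \<omega>"
  define g where "g t = discount \<rho> Mp t \<omega> * (\<alpha> + \<nu> * Mp t \<omega>) * gbm \<theta> \<alpha> \<sigma> x B t \<omega>" for t
  have \<mu>M: "0 \<le> \<mu>M" using Mp_in[of 0] \<mu>m by simp
  have g_nonneg: "0 \<le> g t" for t
    unfolding g_def using Mp_in[of t] discount_pos[of \<rho> Mp t \<omega>] \<alpha> \<nu> \<mu>m x
    by (intro mult_nonneg_nonneg add_nonneg_nonneg) (auto simp: gbm_def)
  have "ennreal (running_gain \<rho> \<alpha> \<nu> Mp (gbm \<theta> \<alpha> \<sigma> x B) T \<omega>)
      \<le> (\<integral>\<^sup>+t. ennreal (indicator {t. 0 \<le> t \<and> ennreal t < T} t *\<^sub>R g t) \<partial>lborel)"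
    unfolding running_gain_def set_lebesgue_integral_def g_def by (rule ennreal_integral_le_nn_integral)
  also have "\<dots> \<le> (\<integral>\<^sup>+t. ennreal ((\<alpha> + \<mu>M) * x) * W * (indicator {0..} t * ennreal (exp (- \<epsilon> * t))) \<partial>lborel)"
  proof (intro nn_integral_mono)
    fix t :: real
    show "ennreal (indicator {t. 0 \<le> t \<and> ennreal t < T} t *\<^sub>R g t)
        \<le> ennreal ((\<alpha> + \<mu>M) * x) * W * (indicator {0..} t * ennreal (exp (- \<epsilon> * t)))"
    proof (cases "0 \<le> t")
      case True
      have "ennreal (indicator {t. 0 \<le> t \<and> ennreal t < T} t *\<^sub>R g t) \<le> ennreal (g t)"
        using g_nonneg[of t] by (intro ennreal_leI) (auto simp: indicator_def)
      also have "\<dots> \<le> ennreal ((\<alpha> + \<mu>M) * x) * W * ennreal (exp (- \<epsilon> * t))"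
        unfolding g_def W_def
        by (rule running_reward_le_envelope[where Mp=Mp and \<omega>=\<omega>, OF Mp_in Mp_meas \<alpha> \<nu> \<mu>m x c True])
      finally show ?thesis using True by simp
    qed simp
  qed
  also have "\<dots> = ennreal ((\<alpha> + \<mu>M) * x) * W * ennreal (1 / \<epsilon>)"
    using nn_integral_exp_neg_halfline[OF \<epsilon>] by (subst nn_integral_cmult) auto
  also have "\<dots> = ennreal ((\<alpha> + \<mu>M) * x / \<epsilon>) * W"
    using \<alpha> \<mu>M x \<epsilon> by (simp add: ennreal_mult[symmetric] mult_ac)
  finally show ?thesis unfolding W_def .
qed

lemma terminal_gain_le:
  assumes Mp_in: "\<And>s. Mp s \<omega> \<in> {\<mu>m..\<mu>M}" and Mp_meas: "(\<lambda>s. Mp s \<omega>) \<in> borel_measurable borel"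
    and F_nonneg: "\<And>t. 0 \<le> F t \<omega>" and F_le: "\<And>t. F t \<omega> \<le> b"
    and \<rho>: "0 \<le> \<rho>" and \<mu>m: "0 \<le> \<mu>m" and x: "0 \<le> x" and \<epsilon>: "0 \<le> \<epsilon>"
    and c: "c = \<theta> - \<alpha> - \<sigma>\<^sup>2 / 2 - (\<rho> + \<mu>m) + \<epsilon>" "c \<le> 0"
  shows "ennreal (terminal_gain \<rho> Mp F (gbm \<theta> \<alpha> \<sigma> x B) K T \<omega>)
    \<le> ennreal (b * x) * exp_brownian_envelope c \<sigma> B \<omega> + ennreal (b * \<bar>K\<bar>)"
proof (cases "T = \<infinity>")
  case False
  define t where "t = enn2real T"
  define X where "X = gbm \<theta> \<alpha> \<sigma> x B t \<omega>"
  define dF where "dF = discount \<rho> Mp t \<omega> * F t \<omega>"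
  have t: "0 \<le> t" by (simp add: t_def)
  have b: "0 \<le> b" using F_nonneg F_le order.trans by blast
  have X: "0 \<le> X" using x by (simp add: X_def gbm_def)
  have d: "0 < discount \<rho> Mp t \<omega>" "discount \<rho> Mp t \<omega> \<le> exp (- (\<rho> + \<mu>m) * t)"
    by (rule discount_pos, rule discount_le_exp[where Mp=Mp and \<omega>=\<omega>, OF Mp_in Mp_meas t])
  moreover have "exp (- (\<rho> + \<mu>m) * t) \<le> 1" using t \<rho> \<mu>m by (simp add: mult_nonpos_nonneg)
  ultimately have "discount \<rho> Mp t \<omega> * F t \<omega> \<le> F t \<omega>"
    using F_nonneg[of t] by (intro mult_left_le_one_le) (auto intro: order.trans)
  with d have dF: "0 \<le> dF" "dF \<le> exp (- (\<rho> + \<mu>m) * t) * b" "dF \<le> b"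
    using F_nonneg[of t] F_le[of t] unfolding dF_def by (auto intro: mult_mono)
  have "terminal_gain \<rho> Mp F (gbm \<theta> \<alpha> \<sigma> x B) K T \<omega> = dF * (X - K)"
    using False by (simp add: terminal_gain_def t_def X_def dF_def)
  also have "\<dots> \<le> dF * X + dF * \<bar>K\<bar>"
    using mult_left_mono[OF abs_ge_minus_self dF(1), of K] by (simp add: algebra_simps)
  also have "\<dots> \<le> b * (exp (- (\<rho> + \<mu>m) * t) * X) + b * \<bar>K\<bar>"
    using mult_right_mono[OF dF(2) X] mult_right_mono[OF dF(3) abs_ge_zero[of K]]
    by (simp add: mult_ac)
  finally have "ennreal (terminal_gain \<rho> Mp F (gbm \<theta> \<alpha> \<sigma> x B) K T \<omega>)
      \<le> ennreal (b * (exp (- (\<rho> + \<mu>m) * t) * X) + b * \<bar>K\<bar>)"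
    by (rule ennreal_leI)
  also have "\<dots> = ennreal b * ennreal (exp (- (\<rho> + \<mu>m) * t) * X) + ennreal (b * \<bar>K\<bar>)"
    using b X by (simp add: ennreal_mult ennreal_plus)
  also have "\<dots> \<le> ennreal b * (ennreal (x * exp (- \<epsilon> * t)) * exp_brownian_envelope c \<sigma> B \<omega>) + ennreal (b * \<bar>K\<bar>)"
    unfolding X_def by (intro add_mono mult_left_mono discounted_gbm_le_envelope[OF c x t]) simp_all
  also have "\<dots> \<le> ennreal b * (ennreal x * exp_brownian_envelope c \<sigma> B \<omega>) + ennreal (b * \<bar>K\<bar>)"
  proof -
    have "exp (- \<epsilon> * t) \<le> 1" using t \<epsilon> by (simp add: mult_nonneg_nonneg)
    then have "x * exp (- \<epsilon> * t) \<le> x" using x by (rule mult_left_le)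
    then show ?thesis by (intro add_mono mult_left_mono mult_right_mono ennreal_leI) simp_all
  qed
  finally show ?thesis using b x by (simp add: ennreal_mult mult.assoc)
qed (simp add: terminal_gain_def)

lemma gain_le_envelope:
  assumes Mp_in: "\<And>s. Mp s \<omega> \<in> {\<mu>m..\<mu>M}" and Mp_meas: "(\<lambda>s. Mp s \<omega>) \<in> borel_measurable borel"
    and F_nonneg: "\<And>t. 0 \<le> F t \<omega>" and F_le: "\<And>t. F t \<omega> \<le> b"
    and \<alpha>: "0 \<le> \<alpha>" and \<nu>: "0 \<le> \<nu>" "\<nu> \<le> 1" and \<rho>: "0 \<le> \<rho>" and \<mu>m: "0 \<le> \<mu>m"
    and x: "0 \<le> x" and \<epsilon>: "0 < \<epsilon>" and c: "c = \<theta> - \<alpha> - \<sigma>\<^sup>2 / 2 - (\<rho> + \<mu>m) + \<epsilon>" "c \<le> 0"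
  shows "ennreal (running_gain \<rho> \<alpha> \<nu> Mp (gbm \<theta> \<alpha> \<sigma> x B) T \<omega> + terminal_gain \<rho> Mp F (gbm \<theta> \<alpha> \<sigma> x B) K T \<omega>)
    \<le> ennreal (((\<alpha> + \<mu>M) / \<epsilon> + b) * x) * exp_brownian_envelope c \<sigma> B \<omega> + ennreal (b * \<bar>K\<bar>)"
proof -
  define W where "W = exp_brownian_envelope c \<sigma> B \<omega>"
  have \<mu>M: "0 \<le> \<mu>M" using Mp_in[of 0] \<mu>m by simp
  have b: "0 \<le> b" using F_nonneg F_le order.trans by blast
  have "ennreal (running_gain \<rho> \<alpha> \<nu> Mp (gbm \<theta> \<alpha> \<sigma> x B) T \<omega> + terminal_gain \<rho> Mp F (gbm \<theta> \<alpha> \<sigma> x B) K T \<omega>)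
      \<le> ennreal (running_gain \<rho> \<alpha> \<nu> Mp (gbm \<theta> \<alpha> \<sigma> x B) T \<omega>) + ennreal (terminal_gain \<rho> Mp F (gbm \<theta> \<alpha> \<sigma> x B) K T \<omega>)"
    using x \<alpha> \<nu> \<mu>m
    by (intro ennreal_add_le running_gain_nonneg[where Mp=Mp and \<omega>=\<omega>, OF Mp_in]) (auto simp: gbm_def)
  also have "\<dots> \<le> ennreal ((\<alpha> + \<mu>M) * x / \<epsilon>) * W + (ennreal (b * x) * W + ennreal (b * \<bar>K\<bar>))"
    unfolding W_def using \<alpha> \<nu> \<mu>m x \<epsilon> \<rho> c F_nonneg F_le
    by (intro add_mono running_gain_le[where Mp=Mp and \<omega>=\<omega>, OF Mp_in Mp_meas]
        terminal_gain_le[where Mp=Mp and \<omega>=\<omega>, OF Mp_in Mp_meas]) auto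
  also have "\<dots> = ennreal (((\<alpha> + \<mu>M) / \<epsilon> + b) * x) * W + ennreal (b * \<bar>K\<bar>)"
  proof -
    have "((\<alpha> + \<mu>M) / \<epsilon> + b) * x = (\<alpha> + \<mu>M) * x / \<epsilon> + b * x" by (simp add: ring_distribs)
    moreover have "0 \<le> (\<alpha> + \<mu>M) * x / \<epsilon>" "0 \<le> b * x" using \<alpha> \<mu>M x \<epsilon> b by simp_all
    ultimately have "ennreal (((\<alpha> + \<mu>M) / \<epsilon> + b) * x) = ennreal ((\<alpha> + \<mu>M) * x / \<epsilon>) + ennreal (b * x)"
      by (simp add: ennreal_plus)
    then show ?thesis by (simp add: distrib_right add.assoc)
  qed
  finally show ?thesis unfolding W_def .
qed

context mortality_chain
begin

text \<open>With \<kappa> = \<rho> + \<mu>m - (\<theta> - \<alpha>) > 0, half of the margin \<kappa> makes the time integral of the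
  running reward converge, and the other half makes the envelope integrable.\<close>

lemma expected_gain_le:
  fixes M :: "'a measure" and B :: "real \<Rightarrow> 'a \<Rightarrow> real" and E U :: "nat \<Rightarrow> 'a \<Rightarrow> real"
    and \<tau> :: "'a \<Rightarrow> ennreal" and n :: nat and \<theta> \<alpha> \<sigma> \<rho> \<nu> K \<rho>h \<mu>h x \<mu> :: real
  defines "\<kappa> \<equiv> \<rho> + \<mu>m - (\<theta> - \<alpha>)"
  assumes M: "prob_space M" and BM: "std_brownian_motion M B"
    and U: "\<And>k. distributed M lborel (U k) (indicator {0<..<1})"
    and \<alpha>: "0 \<le> \<alpha>" and \<sigma>: "0 < \<sigma>" and \<rho>: "0 < \<rho>" and \<nu>: "0 \<le> \<nu>" "\<nu> \<le> 1"
    and h: "0 \<le> \<rho>h + \<mu>h" and \<mu>m: "0 \<le> \<mu>m" and \<kappa>: "0 < \<kappa>"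
    and n: "n \<le> N" and \<mu>: "\<mu> \<in> {\<mu>m..\<mu>M}" and x: "0 < x"
  defines "Mp \<equiv> chain_mu lam q E U n \<mu>" and "X \<equiv> gbm \<theta> \<alpha> \<sigma> x B"
    and "F \<equiv> \<lambda>t \<omega>. fhat M lam q E U \<rho> \<rho>h \<mu>h (chain_n lam E n t \<omega>) (chain_mu lam q E U n \<mu> t \<omega>)"
  shows "(\<integral>\<omega>. running_gain \<rho> \<alpha> \<nu> Mp X (\<tau> \<omega>) \<omega> + terminal_gain \<rho> Mp F X K (\<tau> \<omega>) \<omega> \<partial>completion M)
    \<le> ((\<alpha> + \<mu>M) / (\<kappa> / 2) + (\<rho>h + \<mu>h) / \<rho>) * (2 * exp (\<sigma>\<^sup>2 / 2) / (1 - exp (- \<kappa> / 2))) * x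
      + (\<rho>h + \<mu>h) / \<rho> * \<bar>K\<bar>"
proof -
  interpret prob_space M by fact
  define c where "c = - (\<kappa> + \<sigma>\<^sup>2) / 2"
  have c_eq: "c = \<theta> - \<alpha> - \<sigma>\<^sup>2 / 2 - (\<rho> + \<mu>m) + \<kappa> / 2" and c_bound: "c + \<sigma>\<^sup>2 / 2 = - \<kappa> / 2"
    by (simp_all add: c_def \<kappa>_def field_simps)
  then have "c \<le> 0" "c + \<sigma>\<^sup>2 / 2 < 0" using \<kappa> zero_le_power2[of \<sigma>] by linarith+
  define b where "b = (\<rho>h + \<mu>h) / \<rho>"
  define a where "a = (\<alpha> + \<mu>M) / (\<kappa> / 2) + b"
  define CW where "CW = 2 * exp (\<sigma>\<^sup>2 / 2) / (1 - exp (- \<kappa> / 2))"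
  define W where "W = exp_brownian_envelope c \<sigma> B"
  define G where "G \<omega> = running_gain \<rho> \<alpha> \<nu> Mp X (\<tau> \<omega>) \<omega> + terminal_gain \<rho> Mp F X K (\<tau> \<omega>) \<omega>" for \<omega>
  have "0 \<le> \<mu>M" using \<mu> \<mu>m by simp
  then have b: "0 \<le> b" and a: "0 \<le> a" and CW: "0 \<le> CW"
    using \<alpha> \<kappa> h \<rho> by (simp_all add: a_def b_def CW_def)
  have G_le: "ennreal (G \<omega>) \<le> ennreal (a * x) * W \<omega> + ennreal (b * \<bar>K\<bar>)"
    if good: "\<forall>k. U k \<omega> \<in> {0<..<1}" for \<omega>
    unfolding G_def a_def W_def Mp_def X_def
  proof (rule gain_le_envelope)
    note Mp_in = chain_mu_in_bounds[where E=E and U=U and \<omega>=\<omega>, OF \<mu> n good]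
    show "chain_mu lam q E U n \<mu> s \<omega> \<in> {\<mu>m..\<mu>M}" for s by (rule Mp_in)
    show "(\<lambda>s. chain_mu lam q E U n \<mu> s \<omega>) \<in> borel_measurable borel"
      by (rule chain_mu_path_measurable[OF n])
    show "0 \<le> F t \<omega>" "F t \<omega> \<le> b" for t
      using fhat_in_bounds[where E=E and U=U, OF M U \<rho> h \<mu>m Mp_in chain_n_le[OF n, of E t \<omega>]]
      by (simp_all add: F_def b_def)
  qed (use \<alpha> \<nu> \<rho> \<mu>m x \<kappa> c_eq \<open>c \<le> 0\<close> in auto)
  have "(\<integral>\<^sup>+\<omega>. ennreal (G \<omega>) \<partial>completion M) = (\<integral>\<^sup>+\<omega>. ennreal (G \<omega>) \<partial>M)"
    by (rule nn_integral_completion)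
  also have "\<dots> \<le> (\<integral>\<^sup>+\<omega>. ennreal (a * x) * W \<omega> + ennreal (b * \<bar>K\<bar>) \<partial>M)"
    using AE_uniform_in_unit_interval[of M U, OF M U]
    by (intro nn_integral_mono_AE) (auto elim!: eventually_mono intro!: G_le)
  also have "\<dots> = ennreal (a * x) * (\<integral>\<^sup>+\<omega>. W \<omega> \<partial>M) + ennreal (b * \<bar>K\<bar>)"
    using borel_measurable_exp_brownian_envelope[OF M BM \<sigma> \<open>c + \<sigma>\<^sup>2 / 2 < 0\<close>]
    by (simp add: W_def nn_integral_add nn_integral_cmult emeasure_space_1)
  also have "\<dots> \<le> ennreal (a * x) * ennreal CW + ennreal (b * \<bar>K\<bar>)"
    using nn_integral_exp_brownian_envelope_le[OF M BM \<sigma> \<open>c + \<sigma>\<^sup>2 / 2 < 0\<close>]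
    unfolding W_def CW_def c_bound by (intro add_mono mult_left_mono) simp_all
  also have "\<dots> = ennreal (a * CW * x + b * \<bar>K\<bar>)"
    using a b x CW by (simp add: ennreal_mult'' ennreal_plus mult_ac)
  finally have "(\<integral>\<^sup>+\<omega>. ennreal (G \<omega>) \<partial>completion M) \<le> ennreal (a * CW * x + b * \<bar>K\<bar>)" .
  then have "integral\<^sup>L (completion M) G \<le> a * CW * x + b * \<bar>K\<bar>"
    using a b x CW by (intro integral_real_bounded) auto
  then show ?thesis unfolding G_def a_def b_def CW_def .
qed

lemma value_fn_nonneg:
  fixes M :: "'a measure" and B :: "real \<Rightarrow> 'a \<Rightarrow> real" and E U :: "nat \<Rightarrow> 'a \<Rightarrow> real"
    and n :: nat and \<theta> \<alpha> \<sigma> \<rho> \<nu> K \<rho>h \<mu>h x \<mu> :: real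
  assumes M: "prob_space M" and U: "\<And>k. distributed M lborel (U k) (indicator {0<..<1})"
    and \<alpha>: "0 \<le> \<alpha>" and \<nu>: "0 \<le> \<nu>" and \<mu>m: "0 \<le> \<mu>m"
    and n: "n \<le> N" and \<mu>: "\<mu> \<in> {\<mu>m..\<mu>M}" and x: "0 < x"
  shows "0 \<le> value_fn M B E U lam q \<theta> \<alpha> \<sigma> \<rho> \<nu> K \<rho>h \<mu>h x n \<mu>"
proof -
  let ?G = "\<lambda>\<omega>. running_gain \<rho> \<alpha> \<nu> (chain_mu lam q E U n \<mu>) (gbm \<theta> \<alpha> \<sigma> x B) \<infinity> \<omega>"
  have "AE \<omega> in M. 0 \<le> ?G \<omega>"
    using AE_uniform_in_unit_interval[of M U, OF M U]
  proof eventually_elim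
    case (elim \<omega>)
    show ?case
      using chain_mu_in_bounds[where E=E and U=U and \<omega>=\<omega>, OF \<mu> n elim] \<mu>m \<alpha> \<nu> x
      by (intro running_gain_nonneg) (auto simp: gbm_def)
  qed
  then have "0 \<le> (\<integral>\<omega>. ?G \<omega> \<partial>completion M)"
    by (intro integral_nonneg_AE AE_completion)
  also have "ereal (\<integral>\<omega>. ?G \<omega> \<partial>completion M) \<le> value_fn M B E U lam q \<theta> \<alpha> \<sigma> \<rho> \<nu> K \<rho>h \<mu>h x n \<mu>"
    unfolding value_fn_eq_SUP_gain
    by (rule SUP_upper2[where i="\<lambda>_. \<infinity>"]) (simp_all add: stopping_time_const terminal_gain_def)
  finally show ?thesis by (simp add: zero_ereal_def)
qed

lemma value_fn_le:
  fixes M :: "'a measure" and B :: "real \<Rightarrow> 'a \<Rightarrow> real" and E U :: "nat \<Rightarrow> 'a \<Rightarrow> real"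
    and n :: nat and \<theta> \<alpha> \<sigma> \<rho> \<nu> K \<rho>h \<mu>h x \<mu> :: real
  defines "\<kappa> \<equiv> \<rho> + \<mu>m - (\<theta> - \<alpha>)"
  assumes "prob_space M" and "std_brownian_motion M B"
    and "\<And>k. distributed M lborel (U k) (indicator {0<..<1})"
    and "0 \<le> \<alpha>" and "0 < \<sigma>" and "0 < \<rho>" and "0 \<le> \<nu>" "\<nu> \<le> 1"
    and "0 \<le> \<rho>h + \<mu>h" and "0 \<le> \<mu>m" and "0 < \<kappa>"
    and "n \<le> N" and "\<mu> \<in> {\<mu>m..\<mu>M}" and "0 < x"
  shows "value_fn M B E U lam q \<theta> \<alpha> \<sigma> \<rho> \<nu> K \<rho>h \<mu>h x n \<mu>
    \<le> ereal (((\<alpha> + \<mu>M) / (\<kappa> / 2) + (\<rho>h + \<mu>h) / \<rho>) * (2 * exp (\<sigma>\<^sup>2 / 2) / (1 - exp (- \<kappa> / 2))) * x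
      + (\<rho>h + \<mu>h) / \<rho> * \<bar>K\<bar>)"
  unfolding value_fn_eq_SUP_gain \<kappa>_def
  by (intro SUP_least, unfold ereal_less_eq(3), rule expected_gain_le[OF assms(2-)[unfolded \<kappa>_def]])

end

theorem proposition5p1:
  fixes M :: "'a measure" and B :: "real \<Rightarrow> 'a \<Rightarrow> real"
    and E U :: "nat \<Rightarrow> 'a \<Rightarrow> real"
    and lam :: "nat \<Rightarrow> real" and q :: "nat \<Rightarrow> real \<Rightarrow> real measure" and N :: nat
    and \<theta> \<alpha> \<sigma> \<rho> \<nu> K \<rho>h \<mu>h \<mu>m \<mu>M :: real
  assumes M: "prob_space M"
    and BM: "std_brownian_motion M B"
    and E_exp: "\<And>k. distributed M lborel (E k) (exponential_density 1)"
    and U_unif: "\<And>k. distributed M lborel (U k) (indicator {0<..<1})"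
    and EU_indep: "prob_space.indep_vars M (\<lambda>_. borel) (case_sum E U) UNIV"
    and B_EU_indep: "prob_space.indep_set M
        (sigma_sets (space M) {B t -` A \<inter> space M | t A. 0 \<le> t \<and> A \<in> sets borel})
        (sigma_sets (space M) {case_sum E U i -` A \<inter> space M | i A. A \<in> sets borel})"
    and lam_nonneg: "\<And>i. 1 \<le> i \<Longrightarrow> i \<le> N \<Longrightarrow> 0 \<le> lam i"
    and lam_zero: "\<And>i. N + 1 \<le> i \<Longrightarrow> lam i = 0"
    and q_prob: "\<And>n \<mu>. n + 1 \<le> N \<Longrightarrow> \<mu> \<in> {\<mu>m..\<mu>M} \<Longrightarrow>
        prob_space (q n \<mu>) \<and> sets (q n \<mu>) = sets borel \<and> emeasure (q n \<mu>) {\<mu>m..\<mu>M} = 1"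
    and q_meas: "\<And>n A. n + 1 \<le> N \<Longrightarrow> A \<in> sets borel \<Longrightarrow>
        (\<lambda>\<mu>. emeasure (q n \<mu>) A) \<in> borel_measurable (restrict_space borel {\<mu>m..\<mu>M})"
    and \<theta>: "0 < \<theta>" and \<alpha>: "0 \<le> \<alpha>" and \<sigma>: "0 < \<sigma>" and \<rho>: "0 < \<rho>"
    and \<nu>: "0 \<le> \<nu>" "\<nu> \<le> 1" and \<rho>h: "0 < \<rho>h"
    and \<mu>m: "0 < \<mu>m" and \<mu>mM: "\<mu>m \<le> \<mu>M" and \<mu>h: "\<mu>h \<in> {\<mu>m..\<mu>M}"
    and cond: "\<theta> - \<alpha> - \<rho> - \<mu>m < 0"
  shows "\<exists>L>0. \<forall>n \<le> N. \<forall>\<mu> \<in> {\<mu>m..\<mu>M}. \<forall>x>0.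
     0 \<le> value_fn M B E U lam q \<theta> \<alpha> \<sigma> \<rho> \<nu> K \<rho>h \<mu>h x n \<mu> \<and>
     value_fn M B E U lam q \<theta> \<alpha> \<sigma> \<rho> \<nu> K \<rho>h \<mu>h x n \<mu> \<le> ereal (L * (1 + x))"
proof -
  interpret mortality_chain N lam q \<mu>m \<mu>M
    using lam_zero q_prob \<mu>mM by unfold_locales
  define \<kappa> where "\<kappa> = \<rho> + \<mu>m - (\<theta> - \<alpha>)"
  define C where "C = ((\<alpha> + \<mu>M) / (\<kappa> / 2) + (\<rho>h + \<mu>h) / \<rho>) * (2 * exp (\<sigma>\<^sup>2 / 2) / (1 - exp (- \<kappa> / 2)))"
  define D where "D = (\<rho>h + \<mu>h) / \<rho> * \<bar>K\<bar>"
  have \<kappa>: "0 < \<kappa>" using cond by (simp add: \<kappa>_def)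
  have h: "0 \<le> \<rho>h + \<mu>h" using \<rho>h \<mu>h \<mu>m by simp
  have "0 \<le> C" "0 \<le> D" using \<alpha> \<mu>mM \<mu>m \<kappa> h \<rho> by (simp_all add: C_def D_def)
  have "0 \<le> value_fn M B E U lam q \<theta> \<alpha> \<sigma> \<rho> \<nu> K \<rho>h \<mu>h x n \<mu> \<and>
      value_fn M B E U lam q \<theta> \<alpha> \<sigma> \<rho> \<nu> K \<rho>h \<mu>h x n \<mu> \<le> ereal ((C + D + 1) * (1 + x))"
    if "n \<le> N" "\<mu> \<in> {\<mu>m..\<mu>M}" "0 < x" for n \<mu> x
  proof
    show "0 \<le> value_fn M B E U lam q \<theta> \<alpha> \<sigma> \<rho> \<nu> K \<rho>h \<mu>h x n \<mu>"
      using \<mu>m by (intro value_fn_nonneg[OF M U_unif \<alpha> \<nu>(1) _ that]) simp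
    have "value_fn M B E U lam q \<theta> \<alpha> \<sigma> \<rho> \<nu> K \<rho>h \<mu>h x n \<mu> \<le> ereal (C * x + D)"
      unfolding C_def D_def \<kappa>_def using \<mu>m \<kappa>[unfolded \<kappa>_def]
      by (intro value_fn_le[OF M BM U_unif \<alpha> \<sigma> \<rho> \<nu> h _ _ that]) simp_all
    also have "C * x + D \<le> (C + D + 1) * (1 + x)"
      using \<open>0 \<le> C\<close> \<open>0 \<le> D\<close> \<open>0 < x\<close> by (simp add: algebra_simps)
    finally show "value_fn M B E U lam q \<theta> \<alpha> \<sigma> \<rho> \<nu> K \<rho>h \<mu>h x n \<mu> \<le> ereal ((C + D + 1) * (1 + x))"
      by simp
  qed
  moreover have "0 < C + D + 1" using \<open>0 \<le> C\<close> \<open>0 \<le> D\<close> by simp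
  ultimately show ?thesis by blast
qed

end
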